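(* Let $d\ge1$, $1<\alpha<2$, $T>0$, $x_0\in\mathbb{R}^d$, and let $L^\alpha_t$ be a $d$-dimensional symmetric $\alpha$-stable Lévy motion. Let $f:\mathbb{R}^d\to\mathbb{R}^d$ be Lipschitz continuous, $g(x_0)\in\mathbb{R}$ a constant, and $Y$ the solution of $$Y(t)=x_0+\int_0^t f(Y(s))\,ds+g(x_0)L^\alpha_t,\qquad t\in[0,T].$$ For $m\in\mathbb{N}^+$ let $f_m:\mathbb{R}^d\to\mathbb{R}^d$ (e.g. two-layer neural networks of width $m$) and constants $g_m(x_0)\in\mathbb{R}$ satisfy: (i) there is $K>0$ with $|f_m(x_1)-f_m(x_2)|\le K|x_1-x_2|$ for all $x_1,x_2\in\mathbb{R}^d$ and all $m$; (ii) $\|f_m-f\|_{L^2(D)}\to0$ as $m\to\infty$ for every compact $D\subset\mathbb{R}^d$, and $g_m(x_0)\to g(x_0)$. For $\Delta t\in(0,1)$ with $T/\Delta t\in\mathbb{N}$, let $X^{(m)}=X^{(m,\Delta t)}$ be the continuous-time Euler–Maruyama process $$X^{(m)}(t)=x_0+\int_0^t f_m(\overline{X^{(m)}}(s))\,ds+g_m(x_0)L^\alpha_t,\qquad t\in[0,T],$$ where $\overline{X^{(m)}}(t)=X^{(m)}(k\Delta t)$ for $t\in[k\Delta t,(k+1)\Delta t)$. Then $X^{(m)}\to Y$ in probability with respect to the Skorokhod distance $d_T$ on $\mathbb{D}_{\mathbb{R}^d}[0,T]$, in the sense that for every $\delta>0$, $$\mathbb{P}\big(d_T(Y,X^{(m,\Delta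 t)})>\delta\big)\to0\quad\text{as } m\to\infty\text{ and }\Delta t\to0.$$
   Context: A symmetric $\alpha$-stable Lévy motion $L^\alpha_t$ ($0<\alpha<2$) is a process with $L^\alpha_0=0$ a.s., independent increments, $L^\alpha_t-L^\alpha_s\sim S_\alpha((t-s)^{1/\alpha},0,0)$ for $s<t$, and stochastically continuous paths. The diffusion coefficient $g_m(x_0)$ is interpreted as the $d\times d$ diagonal matrix $g_m(x_0)I_d$ (likewise for $g(x_0)$). $\mathbb{D}_{\mathbb{R}^d}[0,T]$ is the Skorokhod space of càdlàg functions $[0,T]\to\mathbb{R}^d$ with the Skorokhod metric $d_T$. $L^2(D)$ is with respect to Lebesgue measure; $|\cdot|$ is the Euclidean norm. *)

theory Defs
  imports "HOL-Probability.Probability"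
begin

definition cadlag_on :: "real \<Rightarrow> (real \<Rightarrow> 'b::metric_space) \<Rightarrow> bool" where
  "cadlag_on T x \<longleftrightarrow>
     (\<forall>t\<in>{0..<T}. (x \<longlongrightarrow> x t) (at_right t)) \<and>
     (\<forall>t\<in>{0<..T}. \<exists>l. (x \<longlongrightarrow> l) (at_left t))"

definition time_changes :: "real \<Rightarrow> (real \<Rightarrow> real) set" where
  "time_changes T = {lam. strict_mono_on {0..T} lam \<and> continuous_on {0..T} lam \<and> lam ` {0..T} = {0..T}}"

definition skorokhod_dist :: "real \<Rightarrow> (real \<Rightarrow> 'b::real_normed_vector) \<Rightarrow> (real \<Rightarrow> 'b) \<Rightarrow> real" where
  "skorokhod_dist T x y =
     Inf {max (SUP t\<in>{0..T}. \<bar>lam t - t\<bar>) (SUP t\<in>{0..T}. norm (x t - y (lam t))) | lam. lam \<in> time_changes T}"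

text \<open>d-dimensional symmetric alpha-stable Levy motion: components of each increment
  L_t - L_s are independent S_alpha((t-s)^(1/alpha),0,0), expressed via the characteristic function
  E exp(i u.(L_t - L_s)) = exp(-(t-s) * sum_j |u_j|^alpha).\<close>
definition sym_stable_levy_motion ::
    "'a measure \<Rightarrow> real \<Rightarrow> (real \<Rightarrow> 'a \<Rightarrow> real^'n) \<Rightarrow> bool" where
  "sym_stable_levy_motion M \<alpha> L \<longleftrightarrow>
     prob_space M \<and>
     (\<forall>t\<ge>0. L t \<in> borel_measurable M) \<and>
     (AE \<omega> in M. L 0 \<omega> = 0) \<and>
     (\<forall>(ts::nat \<Rightarrow> real) n. (\<forall>i<n. 0 \<le> ts i \<and> ts i < ts (Suc i)) \<longrightarrow>
        prob_space.indep_vars M (\<lambda>_. borel) (\<lambda>i \<omega>. L (ts (Suc i)) \<omega> - L (ts i) \<omega>) {..<n}) \<and>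
     (\<forall>s t u. 0 \<le> s \<and> s < t \<longrightarrow>
        integral\<^sup>L M (\<lambda>\<omega>. cis (u \<bullet> (L t \<omega> - L s \<omega>)))
          = complex_of_real (exp (- (t - s) * (\<Sum>j\<in>UNIV. \<bar>u $ j\<bar> powr \<alpha>)))) \<and>
     (\<forall>t\<ge>0. \<forall>\<epsilon>>0. ((\<lambda>s. measure M {\<omega>\<in>space M. dist (L s \<omega>) (L t \<omega>) > \<epsilon>}) \<longlongrightarrow> 0)
                      (at t within {0..}))"

end

theory Submission
  imports Defs
begin

text \<open>
  The argument is pathwise. With the identity time change the Skorokhod distance is at most
  the uniform distance, so it suffices to make \<open>sup\<^sub>t \<bar>Y t - X t\<bar>\<close> small. Outside an event
  of small probability the Levy path is bounded by some \<open>B\<close>, and its oscillation averaged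
  over the cells of the time grid is small, because a cadlag path has only finitely many
  jumps exceeding any given size. On such a path a discrete Gronwall argument along the grid
  bounds the error by \<open>\<bar>g - g\<^sub>m\<bar>\<close>, by the averaged oscillation, by the distance of \<open>f\<close> and
  \<open>f\<^sub>m\<close> on a ball containing the Euler iterates (equi-Lipschitz functions converging in \<open>L\<^sup>2\<close>
  converge uniformly on compact sets) and by terms of order \<open>\<Delta>t\<close>.
\<close>

lemma norm_triangle_ineq3:
  fixes a b c :: "'a::real_normed_vector"
  shows "norm (a + b + c) \<le> norm a + norm b + norm c"
  using norm_triangle_ineq[of "a + b" c] norm_triangle_ineq[of a b] by linarith

lemma norm_diff_le_of_close:
  fixes a b c :: "'b::real_normed_vector"
  assumes "norm (a - c) < e / 2" "norm (b - c) < e / 2"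
  shows "norm (a - b) \<le> e"
proof -
  have "norm (a - b) \<le> norm (a - c) + norm (b - c)"
    by (metis norm_diff_triangle_le norm_minus_commute order_refl)
  thus ?thesis using assms by linarith
qed

lemma mult_le_of_le_div_add_one:
  fixes x y d :: real
  assumes "0 \<le> x" "0 \<le> y" "y \<le> d / (x + 1)"
  shows "x * y \<le> d"
proof -
  have "x * y \<le> (x + 1) * y" using assms by (simp add: algebra_simps)
  also have "\<dots> \<le> (x + 1) * (d / (x + 1))" using assms by (intro mult_left_mono) auto
  also have "\<dots> = d" using assms by simp
  finally show ?thesis .
qed

lemma lipschitz_on_UNIV_normE:
  assumes "C-lipschitz_on UNIV f"
  obtains C' where "C' > 0" "\<And>x y. norm (f x - f y) \<le> C' * norm (x - y)"
proof
  show "max C 1 > 0" by simp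
  fix x y
  have "dist (f x) (f y) \<le> C * dist x y" using lipschitz_onD[OF assms] by simp
  also have "\<dots> \<le> max C 1 * dist x y" by (intro mult_right_mono) auto
  finally show "norm (f x - f y) \<le> max C 1 * norm (x - y)" by (simp add: dist_norm)
qed

lemma has_integral_interval_of_indefinite:
  fixes F :: "real \<Rightarrow> 'b::banach"
  assumes indef: "\<And>t. t \<in> {0..T} \<Longrightarrow> (F has_integral G t) {0..t}"
    and ab: "0 \<le> a" "a \<le> b" "b \<le> T"
  shows "(F has_integral (G b - G a)) {a..b}"
proof -
  have int_b: "F integrable_on {0..b}" using indef[of b] ab by (auto simp: integrable_on_def)
  have "integral {0..a} F + integral {a..b} F = integral {0..b} F"
    by (rule Henstock_Kurzweil_Integration.integral_combine[OF ab(1,2) int_b])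
  moreover have "integral {0..a} F = G a" "integral {0..b} F = G b"
    using indef ab by (auto intro: integral_unique)
  moreover have "F integrable_on {a..b}"
    using ab by (intro integrable_subinterval_real[OF int_b]) auto
  ultimately show ?thesis by (metis add_diff_cancel_left' has_integral_integrable_integral)
qed

lemma indefinite_integral_at_0:
  assumes "(F has_integral G) {0..0::real}"
  shows "G = 0"
  using assms has_integral_refl(2)[of F 0] by (auto intro: has_integral_unique)

lemma skorokhod_dist_le_uniform_dist:
  fixes x y :: "real \<Rightarrow> 'b::real_normed_vector"
  assumes T: "T \<ge> 0"
    and y_bounded: "\<And>t. t \<in> {0..T} \<Longrightarrow> norm (y t) \<le> B"
    and close: "\<And>t. t \<in> {0..T} \<Longrightarrow> norm (x t - y t) \<le> c"
  shows "skorokhod_dist T x y \<le> c"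
proof -
  define E where "E lam = max (SUP t\<in>{0..T}. \<bar>lam t - t\<bar>) (SUP t\<in>{0..T}. norm (x t - y (lam t)))"
    for lam :: "real \<Rightarrow> real"
  have c0: "0 \<le> c" using close[of 0] T by (smt (verit) atLeastAtMost_iff norm_ge_zero)
  have E_id: "E (\<lambda>t. t) \<le> c"
    unfolding E_def using T close c0 by (auto intro!: cSUP_least)
  have E_nonneg: "0 \<le> E lam" if "lam \<in> time_changes T" for lam
  proof -
    have im: "lam ` {0..T} = {0..T}" using that unfolding time_changes_def by auto
    have "norm (x t - y (lam t)) \<le> 2 * B + c" if t: "t \<in> {0..T}" for t
    proof -
      have "norm (x t) \<le> B + c"
        using y_bounded[OF t] close[OF t] norm_triangle_sub[of "x t" "y t"] by simp
      moreover have "norm (y (lam t)) \<le> B" using im t y_bounded by blast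
      ultimately show ?thesis using norm_triangle_ineq4[of "x t" "y (lam t)"] by simp
    qed
    hence "norm (x 0 - y (lam 0)) \<le> (SUP t\<in>{0..T}. norm (x t - y (lam t)))"
      using T by (intro cSUP_upper bdd_aboveI2) auto
    thus ?thesis unfolding E_def by (smt (verit) norm_ge_zero)
  qed
  have id: "(\<lambda>t. t) \<in> time_changes T"
    unfolding time_changes_def by (auto simp: strict_mono_on_def)
  have "skorokhod_dist T x y = Inf (E ` time_changes T)"
    unfolding skorokhod_dist_def E_def by (simp add: setcompr_eq_image)
  also have "\<dots> \<le> E (\<lambda>t. t)"
    using id E_nonneg by (intro cInf_lower) (auto intro!: bdd_belowI[of _ 0])
  finally show ?thesis using E_id by simp
qed

lemma discrete_gronwall:
  fixes u :: "nat \<Rightarrow> real"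
  assumes A: "A \<ge> 0" and c: "c \<ge> 0"
    and rec: "\<And>k. k \<le> N \<Longrightarrow> u k \<le> A + c * (\<Sum>j<k. u j)"
    and k: "k \<le> N"
  shows "u k \<le> A * exp (c * k)"
proof -
  have pow: "u k \<le> A * (1 + c) ^ k" if "k \<le> N" for k
    using that
  proof (induction k rule: less_induct)
    case (less k)
    have "(\<Sum>j<k. u j) \<le> (\<Sum>j<k. A * (1 + c) ^ j)"
      using less by (intro sum_mono) auto
    hence "u k \<le> A + c * (\<Sum>j<k. A * (1 + c) ^ j)"
      using rec[OF less.prems] c by (meson add_left_mono mult_left_mono order_trans)
    also have "\<dots> = A * (1 + c) ^ k"
      using power_diff_1_eq[of "1 + c" k] by (simp add: sum_distrib_left[symmetric] algebra_simps)
    finally show ?case .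
  qed
  have "(1 + c) ^ k \<le> exp c ^ k"
    using c by (intro power_mono) (auto simp: add.commute)
  also have "\<dots> = exp (c * k)"
    by (simp add: exp_of_nat_mult[symmetric] mult.commute)
  finally show ?thesis
    using pow[OF k] A by (meson mult_left_mono order_trans)
qed

lemma has_integral_exp_linear:
  fixes C t :: real
  assumes C: "C > 0" and t: "0 \<le> t"
  shows "((\<lambda>s. exp (C * s)) has_integral (exp (C * t) - 1) / C) {0..t}"
proof -
  have "((\<lambda>s. exp (C * s)) has_integral (exp (C * t) / C - exp (C * 0) / C)) {0..t}"
  proof (rule fundamental_theorem_of_calculus[OF t])
    fix x assume "x \<in> {0..t}"
    show "((\<lambda>s. exp (C * s) / C) has_vector_derivative exp (C * x)) (at x within {0..t})"
      using C by (auto intro!: derivative_eq_intros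
          simp: has_real_derivative_iff_has_vector_derivative[symmetric])
  qed
  thus ?thesis by (simp add: diff_divide_distrib)
qed

text \<open>The weighted supremum \<open>S = sup e\<^sup>-\<^sup>2\<^sup>C\<^sup>t \<phi> t\<close> is finite and satisfies \<open>S \<le> A + S/2\<close>.\<close>
lemma gronwall_bounded:
  fixes \<phi> :: "real \<Rightarrow> real"
  assumes C: "C > 0" and A: "A \<ge> 0" and T: "T \<ge> 0"
    and int: "\<phi> integrable_on {0..T}"
    and nonneg: "\<And>t. t \<in> {0..T} \<Longrightarrow> 0 \<le> \<phi> t"
    and bounded: "\<And>t. t \<in> {0..T} \<Longrightarrow> \<phi> t \<le> Mb"
    and rec: "\<And>t. t \<in> {0..T} \<Longrightarrow> \<phi> t \<le> A + C * integral {0..t} \<phi>"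
    and t: "t \<in> {0..T}"
  shows "\<phi> t \<le> 2 * A * exp (2 * C * T)"
proof -
  define S where "S = (SUP t\<in>{0..T}. exp (- (2 * C * t)) * \<phi> t)"
  have bdd: "bdd_above ((\<lambda>t. exp (- (2 * C * t)) * \<phi> t) ` {0..T})"
  proof (rule bdd_aboveI2)
    fix t assume t: "t \<in> {0..T}"
    have "exp (- (2 * C * t)) \<le> 1" using C t by auto
    hence "exp (- (2 * C * t)) * \<phi> t \<le> 1 * \<phi> t"
      using nonneg[OF t] by (intro mult_right_mono) auto
    thus "exp (- (2 * C * t)) * \<phi> t \<le> Mb" using bounded[OF t] by simp
  qed
  have le_S: "exp (- (2 * C * t)) * \<phi> t \<le> S" if "t \<in> {0..T}" for t
    unfolding S_def using bdd that by (rule cSUP_upper2) auto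
  have S0: "S \<ge> 0" using le_S[of 0] nonneg[of 0] T by simp
  have \<phi>_le: "\<phi> s \<le> S * exp (2 * C * s)" if "s \<in> {0..T}" for s
  proof -
    have "exp (- (2 * C * s)) * \<phi> s * exp (2 * C * s) \<le> S * exp (2 * C * s)"
      using le_S[OF that] by (intro mult_right_mono) auto
    thus ?thesis by (simp add: exp_minus field_simps)
  qed
  have weighted_le: "exp (- (2 * C * t)) * \<phi> t \<le> A + S / 2" if t: "t \<in> {0..T}" for t
  proof -
    have ei: "((\<lambda>s. S * exp ((2 * C) * s)) has_integral S * ((exp ((2 * C) * t) - 1) / (2 * C))) {0..t}"
      using has_integral_exp_linear[of "2 * C" t] C t by (intro has_integral_mult_right) auto
    have "integral {0..t} \<phi> \<le> integral {0..t} (\<lambda>s. S * exp ((2 * C) * s))"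
      using int t \<phi>_le ei by (intro integral_le) (auto intro: integrable_on_subinterval)
    also have "\<dots> = S * ((exp ((2 * C) * t) - 1) / (2 * C))"
      using ei by (rule integral_unique)
    finally have "\<phi> t \<le> A + C * (S * ((exp ((2 * C) * t) - 1) / (2 * C)))"
      using rec[OF t] C by (smt (verit) mult_left_mono)
    also have "\<dots> = A + S * (exp (2 * C * t) - 1) / 2"
      using C by (simp add: field_simps)
    finally have "exp (- (2 * C * t)) * \<phi> t \<le> exp (- (2 * C * t)) * (A + S * (exp (2 * C * t) - 1) / 2)"
      by (intro mult_left_mono) auto
    also have "\<dots> = exp (- (2 * C * t)) * A + S / 2 - exp (- (2 * C * t)) * S / 2"
      by (simp add: field_simps exp_minus)
    also have "\<dots> \<le> A + S / 2"
    proof -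
      have "exp (- (2 * C * t)) * A \<le> A" using C t A by (simp add: mult_left_le_one_le)
      moreover have "exp (- (2 * C * t)) * S / 2 \<ge> 0" using S0 by simp
      ultimately show ?thesis by linarith
    qed
    finally show ?thesis .
  qed
  have "S \<le> A + S / 2"
    unfolding S_def using T weighted_le by (intro cSUP_least) (auto simp: S_def)
  hence "S \<le> 2 * A" by simp
  have "\<phi> t \<le> S * exp (2 * C * t)" by (rule \<phi>_le[OF t])
  also have "\<dots> \<le> 2 * A * exp (2 * C * T)"
    using \<open>S \<le> 2 * A\<close> S0 t C by (intro mult_mono) auto
  finally show ?thesis .
qed

section \<open>Cadlag paths\<close>

definition finite_jump_cover :: "(real \<Rightarrow> 'b::real_normed_vector) \<Rightarrow> real \<Rightarrow> real \<Rightarrow> bool" where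
  "finite_jump_cover l e \<tau> \<longleftrightarrow> (\<exists>P. finite P \<and>
     (\<forall>s t. 0 \<le> s \<and> s \<le> t \<and> t < \<tau> \<and> (\<forall>p\<in>P. \<not> (s < p \<and> p \<le> t)) \<longrightarrow> norm (l t - l s) \<le> e))"

lemma finite_jump_cover_mono: "finite_jump_cover l e \<tau> \<Longrightarrow> \<tau>' \<le> \<tau> \<Longrightarrow> finite_jump_cover l e \<tau>'"
  unfolding finite_jump_cover_def by (meson order_less_le_trans)

lemma finite_jump_cover_extend_right:
  fixes l :: "real \<Rightarrow> 'b::real_normed_vector"
  assumes cover: "finite_jump_cover l e \<sigma>" and rc: "(l \<longlongrightarrow> l \<sigma>) (at_right \<sigma>)" and e: "e > 0"
  shows "\<exists>b>\<sigma>. finite_jump_cover l e b"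
proof -
  obtain b where b: "b > \<sigma>" "\<And>y. \<sigma> < y \<Longrightarrow> y < b \<Longrightarrow> dist (l y) (l \<sigma>) < e / 2"
    using rc e unfolding tendsto_iff eventually_at_right_field by (meson half_gt_zero)
  have near: "norm (l y - l \<sigma>) < e / 2" if "\<sigma> \<le> y" "y < b" for y
    using that b e by (cases "y = \<sigma>") (auto simp: dist_norm)
  obtain P where P: "finite P" "\<And>s t. 0 \<le> s \<Longrightarrow> s \<le> t \<Longrightarrow> t < \<sigma> \<Longrightarrow> \<forall>p\<in>P. \<not> (s < p \<and> p \<le> t)
      \<Longrightarrow> norm (l t - l s) \<le> e"
    using cover unfolding finite_jump_cover_def by blast
  have "finite_jump_cover l e b"
    unfolding finite_jump_cover_def
  proof (intro exI[of _ "insert \<sigma> P"] conjI allI impI)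
    fix s t assume "0 \<le> s \<and> s \<le> t \<and> t < b \<and> (\<forall>q\<in>insert \<sigma> P. \<not> (s < q \<and> q \<le> t))"
    then show "norm (l t - l s) \<le> e"
      using P(2)[of s t] near[of s] near[of t] norm_diff_le_of_close[of "l t" "l \<sigma>" e "l s"]
      by (cases "t < \<sigma>") force+
  qed (use P in simp)
  thus ?thesis using b by blast
qed

lemma finite_jump_cover_left_limit:
  fixes l :: "real \<Rightarrow> 'b::real_normed_vector"
  assumes lim: "(l \<longlongrightarrow> L) (at_left \<sigma>)" and e: "e > 0"
    and approx: "\<And>c. c < \<sigma> \<Longrightarrow> \<exists>\<tau>>c. finite_jump_cover l e \<tau>"
  shows "finite_jump_cover l e \<sigma>"
proof -
  obtain b where b: "b < \<sigma>" "\<And>y. b < y \<Longrightarrow> y < \<sigma> \<Longrightarrow> dist (l y) L < e / 2"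
    using lim e unfolding tendsto_iff eventually_at_left_field by (meson half_gt_zero)
  obtain \<tau> where \<tau>: "\<tau> > b" "finite_jump_cover l e \<tau>" using approx[OF b(1)] by blast
  then obtain P where P: "finite P" "\<And>s t. 0 \<le> s \<Longrightarrow> s \<le> t \<Longrightarrow> t < \<tau> \<Longrightarrow> \<forall>p\<in>P. \<not> (s < p \<and> p \<le> t)
      \<Longrightarrow> norm (l t - l s) \<le> e"
    unfolding finite_jump_cover_def by blast
  define p where "p = (b + \<tau>) / 2"
  have p: "b < p" "p < \<tau>" using \<tau> unfolding p_def by auto
  show ?thesis
    unfolding finite_jump_cover_def
  proof (intro exI[of _ "insert p P"] conjI allI impI)
    fix s t assume st: "0 \<le> s \<and> s \<le> t \<and> t < \<sigma> \<and> (\<forall>q\<in>insert p P. \<not> (s < q \<and> q \<le> t))"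
    show "norm (l t - l s) \<le> e"
    proof (cases "t < \<tau>")
      case False
      hence "p \<le> s" using st p by force
      hence "dist (l t) L < e / 2" "dist (l s) L < e / 2" using b p st by auto
      thus ?thesis by (intro norm_diff_le_of_close) (auto simp: dist_norm)
    qed (use P st in auto)
  qed (use P in simp)
qed

text \<open>Cadlag paths oscillate by more than \<open>e\<close> only at finitely many places:
  the supremum of the times up to which this holds is reached (left limits) and
  cannot be below \<open>T\<close> (right continuity).\<close>
lemma cadlag_on_finite_jump_cover:
  fixes l :: "real \<Rightarrow> 'b::real_normed_vector"
  assumes cad: "cadlag_on T l" and T: "T > 0" and e: "e > 0"
  shows "finite_jump_cover l e T"
proof -
  have rc: "\<And>t. t \<in> {0..<T} \<Longrightarrow> (l \<longlongrightarrow> l t) (at_right t)"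
    and ll: "\<And>t. t \<in> {0<..T} \<Longrightarrow> \<exists>L. (l \<longlongrightarrow> L) (at_left t)"
    using cad unfolding cadlag_on_def by auto
  define S where "S = {\<tau>\<in>{0..T}. finite_jump_cover l e \<tau>}"
  define \<sigma> where "\<sigma> = Sup S"
  have cover0: "finite_jump_cover l e 0"
    unfolding finite_jump_cover_def by (rule exI[of _ "{}"]) auto
  have S0: "0 \<in> S" using cover0 T unfolding S_def by auto
  have bdd: "bdd_above S" unfolding S_def by (rule bdd_aboveI[of _ T]) auto
  have \<sigma>T: "\<sigma> \<le> T" unfolding \<sigma>_def using S0 by (intro cSup_least) (auto simp: S_def)
  have le_\<sigma>: "\<tau> \<le> \<sigma>" if "\<tau> \<in> S" for \<tau> unfolding \<sigma>_def using bdd that by (simp add: cSup_upper)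
  have extend: "\<sigma>' < \<sigma>" if \<sigma>': "\<sigma>' \<in> {0..<T}" "finite_jump_cover l e \<sigma>'" for \<sigma>'
  proof -
    obtain b where "b > \<sigma>'" "finite_jump_cover l e b"
      using finite_jump_cover_extend_right[OF \<sigma>'(2) rc[OF \<sigma>'(1)] e] by blast
    hence "min b T \<in> S" using \<sigma>'(1) finite_jump_cover_mono unfolding S_def by fastforce
    thus ?thesis using le_\<sigma> \<open>b > \<sigma>'\<close> \<sigma>'(1) by fastforce
  qed
  have \<sigma>0: "\<sigma> > 0" using extend[of 0] cover0 T by simp
  obtain L where "(l \<longlongrightarrow> L) (at_left \<sigma>)" using ll \<sigma>0 \<sigma>T by auto
  hence cover: "finite_jump_cover l e \<sigma>"
    using e by (rule finite_jump_cover_left_limit)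
      (use less_cSup_iff[OF _ bdd] S0 in \<open>auto simp: \<sigma>_def S_def\<close>)
  have "\<sigma> = T" using extend[of \<sigma>] cover \<sigma>0 \<sigma>T by fastforce
  thus ?thesis using cover by simp
qed

lemma cadlag_on_bounded:
  fixes l :: "real \<Rightarrow> 'b::real_normed_vector"
  assumes cad: "cadlag_on T l" and T: "T > 0"
  shows "\<exists>B. \<forall>t\<in>{0..T}. norm (l t) \<le> B"
proof -
  obtain P where P: "finite P" "\<And>s t. 0 \<le> s \<Longrightarrow> s \<le> t \<Longrightarrow> t < T \<Longrightarrow> \<forall>p\<in>P. \<not> (s < p \<and> p \<le> t)
      \<Longrightarrow> norm (l t - l s) \<le> 1"
    using cadlag_on_finite_jump_cover[OF cad T, of 1] unfolding finite_jump_cover_def by auto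
  define Bs where "Bs = Max ((\<lambda>p. norm (l p)) ` insert 0 (insert T P))"
  have Bs: "norm (l p) \<le> Bs" if "p \<in> insert 0 (insert T P)" for p
    unfolding Bs_def using P(1) that by (intro Max_ge) auto
  have "norm (l t) \<le> Bs + 1" if t: "t \<in> {0..<T}" for t
  proof -
    define Q where "Q = {p \<in> insert 0 P. 0 \<le> p \<and> p \<le> t}"
    have Q: "finite Q" "Q \<noteq> {}" using P(1) t unfolding Q_def by auto
    define p where "p = Max Q"
    have "p \<in> Q" unfolding p_def using Q by (rule Max_in)
    moreover have "\<forall>q\<in>P. \<not> (p < q \<and> q \<le> t)"
      using Max_ge[OF Q(1)] \<open>p \<in> Q\<close> unfolding p_def Q_def by fastforce
    ultimately have "norm (l t - l p) \<le> 1" "norm (l p) \<le> Bs"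
      using P(2)[of p t] t Bs unfolding Q_def by auto
    thus ?thesis using norm_triangle_sub[of "l t" "l p"] by linarith
  qed
  moreover have "norm (l T) \<le> Bs + 1" using Bs[of T] by simp
  ultimately show ?thesis by (metis atLeastAtMost_iff atLeastLessThan_iff order_less_le)
qed

lemma right_continuous_norm_le_of_rationals:
  fixes l :: "real \<Rightarrow> 'b::real_normed_vector"
  assumes rc: "(l \<longlongrightarrow> l s) (at_right s)" and sb: "s < b"
    and bound: "\<And>q. q \<in> \<rat> \<Longrightarrow> s < q \<Longrightarrow> q < b \<Longrightarrow> norm (l q - c) \<le> M"
  shows "norm (l s - c) \<le> M"
proof (rule field_le_epsilon)
  fix e :: real assume e: "e > 0"
  obtain b' where b': "b' > s" "\<And>y. s < y \<Longrightarrow> y < b' \<Longrightarrow> dist (l y) (l s) < e"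
    using rc e unfolding tendsto_iff eventually_at_right_field by meson
  obtain q where q: "q \<in> \<rat>" "s < q" "q < min b b'"
    using Rats_dense_in_real[of s "min b b'"] sb b' by auto
  have "norm (l s - c) \<le> norm (l q - c) + norm (l q - l s)"
    using norm_triangle_ineq4[of "l q - c" "l q - l s"] by simp
  thus "norm (l s - c) \<le> M + e"
    using bound[OF q(1,2)] b'(2)[of q] q by (simp add: dist_norm)
qed

text \<open>Only rational times enter, so that the grid oscillation of a process is measurable;
  for right-continuous paths this loses nothing, see \<open>grid_oscillation_cell_bounds\<close>.\<close>
definition grid_oscillation :: "real \<Rightarrow> nat \<Rightarrow> (real \<Rightarrow> 'b::real_normed_vector) \<Rightarrow> ennreal" where
  "grid_oscillation T n l = (\<Sum>j<n. ennreal (T / n) *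
     (SUP q\<in>{q\<in>\<rat>. real j * (T / n) \<le> q \<and> q < real (Suc j) * (T / n)}.
        ennreal (norm (l q - l (real j * (T / n))))))"

lemma card_grid_cells_containing_le:
  fixes P :: "real set"
  assumes P: "finite P" and dt: "dt > 0"
  shows "card {j. j < n \<and> (\<exists>p\<in>P. real j * dt < p \<and> p < real (Suc j) * dt)} \<le> card P"
proof -
  have "{j. j < n \<and> (\<exists>p\<in>P. real j * dt < p \<and> p < real (Suc j) * dt)} \<subseteq> (\<lambda>p. nat \<lfloor>p / dt\<rfloor>) ` P"
  proof
    fix j assume "j \<in> {j. j < n \<and> (\<exists>p\<in>P. real j * dt < p \<and> p < real (Suc j) * dt)}"
    then obtain p where p: "p \<in> P" "real j * dt < p" "p < real (Suc j) * dt" by auto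
    have "real j \<le> p / dt" "p / dt < real j + 1" using p dt by (auto simp: field_simps)
    hence "\<lfloor>p / dt\<rfloor> = int j" by (intro floor_unique) auto
    thus "j \<in> (\<lambda>p. nat \<lfloor>p / dt\<rfloor>) ` P" using p(1) by force
  qed
  hence "card {j. j < n \<and> (\<exists>p\<in>P. real j * dt < p \<and> p < real (Suc j) * dt)} \<le> card ((\<lambda>p. nat \<lfloor>p / dt\<rfloor>) ` P)"
    using P by (intro card_mono) auto
  also have "\<dots> \<le> card P" using P by (rule card_image_le)
  finally show ?thesis .
qed

text \<open>Cells free of the jump points contribute at most \<open>\<epsilon>\<close>, each of the at most \<open>card P\<close>
  other cells at most \<open>2 B\<close>.\<close>
lemma grid_oscillation_le:
  fixes l :: "real \<Rightarrow> 'b::real_normed_vector"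
  assumes T: "T > 0" and n: "n \<ge> 1" and B: "\<And>t. t \<in> {0..T} \<Longrightarrow> norm (l t) \<le> B"
    and \<epsilon>: "\<epsilon> \<ge> 0" and P: "finite P"
    and osc: "\<And>s t. 0 \<le> s \<Longrightarrow> s \<le> t \<Longrightarrow> t < T \<Longrightarrow> \<forall>p\<in>P. \<not> (s < p \<and> p \<le> t)
      \<Longrightarrow> norm (l t - l s) \<le> \<epsilon>"
  shows "grid_oscillation T n l \<le> ennreal (T * \<epsilon> + T / n * (2 * B) * card P)"
proof -
  define dt where "dt = T / n"
  have dt: "dt > 0" "real n * dt = T" unfolding dt_def using T n by auto
  have B0: "B \<ge> 0" using B[of 0] T by (smt (verit) atLeastAtMost_iff norm_ge_zero)
  define bad where "bad = {j. j < n \<and> (\<exists>p\<in>P. real j * dt < p \<and> p < real (Suc j) * dt)}"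
  define c where "c = (\<lambda>j. if j \<in> bad then 2 * B else \<epsilon>)"
  have c0: "c j \<ge> 0" for j unfolding c_def using B0 \<epsilon> by auto
  have cell: "norm (l q - l (real j * dt)) \<le> c j"
    if j: "j < n" and q: "real j * dt \<le> q" "q < real (Suc j) * dt" for j q
  proof -
    have "real (Suc j) * dt \<le> real n * dt" using j dt by (intro mult_right_mono) auto
    hence qT: "0 \<le> real j * dt" "q < T" using q dt by auto
    show ?thesis
    proof (cases "j \<in> bad")
      case True
      have "norm (l q - l (real j * dt)) \<le> norm (l q) + norm (l (real j * dt))"
        by (rule norm_triangle_ineq4)
      also have "\<dots> \<le> B + B" using B[of q] B[of "real j * dt"] q qT by (intro add_mono) auto
      finally show ?thesis using True unfolding c_def by simp
    next
      case False
      hence "\<forall>p\<in>P. \<not> (real j * dt < p \<and> p \<le> q)" using q j unfolding bad_def by force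
      thus ?thesis using osc q qT False unfolding c_def by auto
    qed
  qed
  have "grid_oscillation T n l \<le> (\<Sum>j<n. ennreal dt * ennreal (c j))"
    unfolding grid_oscillation_def dt_def[symmetric]
    using cell by (intro sum_mono mult_left_mono SUP_least ennreal_leI) auto
  also have "\<dots> = (\<Sum>j<n. ennreal (dt * c j))"
    using c0 dt by (simp add: ennreal_mult)
  also have "\<dots> = ennreal (\<Sum>j<n. dt * c j)"
    using c0 dt by (intro sum_ennreal) auto
  also have "(\<Sum>j<n. dt * c j) \<le> T * \<epsilon> + dt * (2 * B) * card P"
  proof -
    have "(\<Sum>j<n. dt * c j) \<le> (\<Sum>j<n. dt * \<epsilon> + (if j \<in> bad then dt * (2 * B) else 0))"
      unfolding c_def using dt B0 \<epsilon> by (intro sum_mono) (auto simp: mult_left_mono)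
    also have "\<dots> = real n * dt * \<epsilon> + dt * (2 * B) * card bad"
      using sum.If_cases[of "{..<n}" "\<lambda>j. j \<in> bad" "\<lambda>_. dt * (2 * B)" "\<lambda>_. 0"]
      by (simp add: sum.distrib Int_absorb1 bad_def subset_eq)
    also have "dt * (2 * B) * card bad \<le> dt * (2 * B) * card P"
      using card_grid_cells_containing_le[OF P dt(1), of n] dt B0
      unfolding bad_def by (intro mult_left_mono) auto
    finally show ?thesis using dt by simp
  qed
  finally show ?thesis unfolding dt_def by (simp add: ennreal_leI order_trans)
qed

lemma cadlag_grid_oscillation_eventually_le:
  fixes l :: "real \<Rightarrow> 'b::real_normed_vector"
  assumes cad: "cadlag_on T l" and T: "T > 0" and \<eta>: "\<eta> > 0"
  shows "\<exists>N. \<forall>n\<ge>N. grid_oscillation T n l \<le> ennreal \<eta>"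
proof -
  obtain B where B: "\<And>t. t \<in> {0..T} \<Longrightarrow> norm (l t) \<le> B"
    using cadlag_on_bounded[OF cad T] by blast
  have B0: "B \<ge> 0" using B[of 0] T by (smt (verit) atLeastAtMost_iff norm_ge_zero)
  define \<epsilon> where "\<epsilon> = \<eta> / (2 * T)"
  have \<epsilon>: "\<epsilon> > 0" "T * \<epsilon> = \<eta> / 2" using \<eta> T unfolding \<epsilon>_def by auto
  obtain P where P: "finite P" "\<And>s t. 0 \<le> s \<Longrightarrow> s \<le> t \<Longrightarrow> t < T \<Longrightarrow> \<forall>p\<in>P. \<not> (s < p \<and> p \<le> t)
      \<Longrightarrow> norm (l t - l s) \<le> \<epsilon>"
    using cadlag_on_finite_jump_cover[OF cad T \<epsilon>(1)] unfolding finite_jump_cover_def by auto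
  define N where "N = max 1 (nat \<lceil>4 * B * card P * T / \<eta>\<rceil>)"
  have "grid_oscillation T n l \<le> ennreal \<eta>" if n: "n \<ge> N" for n
  proof -
    have n1: "n \<ge> 1" using n unfolding N_def by simp
    have "nat \<lceil>4 * B * card P * T / \<eta>\<rceil> \<le> n" using n unfolding N_def by simp
    hence "4 * B * card P * T / \<eta> \<le> real n"
      using real_nat_ceiling_ge[of "4 * B * card P * T / \<eta>"] by linarith
    hence "T / n * (2 * B) * card P \<le> \<eta> / 2"
      using n1 \<eta> by (simp add: field_simps)
    hence "T * \<epsilon> + T / n * (2 * B) * card P \<le> \<eta>" using \<epsilon> by linarith
    hence "ennreal (T * \<epsilon> + T / n * (2 * B) * card P) \<le> ennreal \<eta>" by (rule ennreal_leI)
    moreover have "grid_oscillation T n l \<le> ennreal (T * \<epsilon> + T / n * (2 * B) * card P)"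
      using \<epsilon>(1) by (intro grid_oscillation_le[OF T n1 B _ P(1)] P(2)) auto
    ultimately show ?thesis by (rule order_trans[rotated])
  qed
  thus ?thesis by blast
qed

lemma grid_oscillation_cell_bounds:
  fixes l :: "real \<Rightarrow> 'b::real_normed_vector"
  assumes rc: "\<And>t. t \<in> {0..<T} \<Longrightarrow> (l \<longlongrightarrow> l t) (at_right t)"
    and T: "T > 0" and n: "n \<ge> 1" and \<eta>: "\<eta> \<ge> 0"
    and osc: "grid_oscillation T n l \<le> ennreal \<eta>"
  obtains Os where
    "\<And>j s. j < n \<Longrightarrow> real j * (T / n) \<le> s \<Longrightarrow> s < real (Suc j) * (T / n)
       \<Longrightarrow> norm (l s - l (real j * (T / n))) \<le> Os j"
    "(\<Sum>j<n. T / n * Os j) \<le> \<eta>"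
proof -
  define dt where "dt = T / n"
  have dt: "dt > 0" "real n * dt = T" unfolding dt_def using T n by auto
  define S where "S j = (SUP q\<in>{q\<in>\<rat>. real j * dt \<le> q \<and> q < real (Suc j) * dt}.
      ennreal (norm (l q - l (real j * dt))))" for j
  have sum_S: "(\<Sum>j<n. ennreal dt * S j) \<le> ennreal \<eta>"
    using osc unfolding grid_oscillation_def S_def dt_def .
  have finite: "S j < top" if j: "j < n" for j
  proof -
    have "ennreal dt * S j \<le> (\<Sum>j<n. ennreal dt * S j)"
      using j by (intro member_le_sum) auto
    also have "\<dots> \<le> ennreal \<eta>" by (rule sum_S)
    finally have "ennreal dt * S j < top" by (simp add: le_less_trans)
    hence "S j = 0 \<or> S j < top" using dt by (simp add: ennreal_mult_less_top)
    thus ?thesis by (metis top.not_eq_extremum ennreal_zero_neq_top)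
  qed
  have cell: "norm (l s - l (real j * dt)) \<le> enn2real (S j)"
    if j: "j < n" and s: "real j * dt \<le> s" "s < real (Suc j) * dt" for j s
  proof (rule right_continuous_norm_le_of_rationals[OF rc s(2)])
    have "real (Suc j) * dt \<le> real n * dt" using j dt by (intro mult_right_mono) auto
    moreover have "0 \<le> real j * dt" using dt by simp
    ultimately have "0 \<le> s \<and> s < T" using s dt by linarith
    thus "s \<in> {0..<T}" by simp
    fix q assume q: "q \<in> \<rat>" "s < q" "q < real (Suc j) * dt"
    have "ennreal (norm (l q - l (real j * dt))) \<le> S j"
      unfolding S_def using q s by (intro SUP_upper) auto
    hence "enn2real (ennreal (norm (l q - l (real j * dt)))) \<le> enn2real (S j)"
      using finite[OF j] by (rule enn2real_mono)
    thus "norm (l q - l (real j * dt)) \<le> enn2real (S j)" by simp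
  qed
  have "ennreal (\<Sum>j<n. dt * enn2real (S j)) = (\<Sum>j<n. ennreal (dt * enn2real (S j)))"
    using dt by (intro sum_ennreal[symmetric]) auto
  also have "\<dots> = (\<Sum>j<n. ennreal dt * S j)"
    using dt finite by (intro sum.cong) (auto simp: ennreal_mult)
  also have "\<dots> \<le> ennreal \<eta>" by (rule sum_S)
  finally have "(\<Sum>j<n. dt * enn2real (S j)) \<le> \<eta>"
    using \<eta> by simp
  thus thesis using that[of "\<lambda>j. enn2real (S j)"] cell unfolding dt_def by blast
qed

section \<open>Uniform convergence from \<open>L\<^sup>2\<close> convergence\<close>

text \<open>If a Lipschitz function exceeds \<open>e\<close> at \<open>x\<close>, it exceeds \<open>e/2\<close> on a whole ball around \<open>x\<close>.\<close>
lemma L2_lower_bound_of_lipschitz: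
  fixes h :: "'a::euclidean_space \<Rightarrow> 'b::real_normed_vector"
  assumes lip: "\<And>x y. norm (h x - h y) \<le> L * norm (x - y)" and L: "L > 0"
    and hx: "e < norm (h x)" and e: "e > 0"
    and D: "compact D" "ball x (e / (2 * L)) \<subseteq> D"
  shows "(e / 2)\<^sup>2 * measure lborel (ball (0::'a) (e / (2 * L))) \<le> (LINT y:D|lborel. (norm (h y))\<^sup>2)"
proof -
  define r where "r = e / (2 * L)"
  have r: "r > 0" "L * r = e / 2" using e L unfolding r_def by auto
  have "L-lipschitz_on D h"
    using L lip by (intro lipschitz_onI) (auto simp: dist_norm)
  hence cont: "continuous_on D (\<lambda>y. (norm (h y))\<^sup>2)"
    by (intro continuous_intros lipschitz_on_continuous_on)
  have int_D: "integrable lborel (\<lambda>y. indicator D y *\<^sub>R (norm (h y))\<^sup>2)"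
    by (rule borel_integrable_compact[OF D(1) cont])
  have int_ball: "integrable lborel (\<lambda>y. indicator (ball x r) y * (e / 2)\<^sup>2)"
    using emeasure_lborel_ball_finite[of x r]
    by (intro integrable_mult_left) (simp add: integrable_indicator_iff)
  have large: "(e / 2)\<^sup>2 \<le> (norm (h y))\<^sup>2" if y: "y \<in> ball x r" for y
  proof -
    have "norm (h x - h y) \<le> e / 2"
      using lip[of x y] y r L by (smt (verit) dist_norm mem_ball mult_left_mono)
    hence "e / 2 \<le> norm (h y)"
      using hx norm_triangle_ineq2[of "h x" "h y"] by linarith
    thus ?thesis using e by (intro power_mono) auto
  qed
  have "(e / 2)\<^sup>2 * measure lborel (ball (0::'a) r) = integral\<^sup>L lborel (\<lambda>y. indicator (ball x r) y * (e / 2)\<^sup>2)"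
    using content_ball_conv_unit_ball[of r x] content_ball_conv_unit_ball[of r "0::'a"] r(1)
    by simp
  also have "\<dots> \<le> integral\<^sup>L lborel (\<lambda>y. indicator D y *\<^sub>R (norm (h y))\<^sup>2)"
    using large D(2) unfolding r_def[symmetric]
    by (intro integral_mono[OF int_ball int_D]) (auto split: split_indicator)
  also have "\<dots> = (LINT y:D|lborel. (norm (h y))\<^sup>2)"
    unfolding set_lebesgue_integral_def ..
  finally show ?thesis unfolding r_def .
qed

lemma norm_diff_lipschitz_diff_le:
  fixes F G :: "'a::real_normed_vector \<Rightarrow> 'b::real_normed_vector"
  assumes F: "\<And>x y. norm (F x - F y) \<le> K * norm (x - y)"
    and G: "\<And>x y. norm (G x - G y) \<le> C * norm (x - y)"
  shows "norm ((F y - G y) - (F z - G z)) \<le> (\<bar>C\<bar> + \<bar>K\<bar> + 1) * norm (y - z)"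
proof -
  have "(F y - G y) - (F z - G z) = (F y - F z) - (G y - G z)"
    by (simp add: algebra_simps)
  hence "norm ((F y - G y) - (F z - G z)) \<le> norm (F y - F z) + norm (G y - G z)"
    by (metis norm_triangle_ineq4)
  also have "\<dots> \<le> \<bar>K\<bar> * norm (y - z) + \<bar>C\<bar> * norm (y - z)"
    using F[of y z] G[of y z] mult_right_mono[OF abs_ge_self[of K] norm_ge_zero[of "y - z"]]
      mult_right_mono[OF abs_ge_self[of C] norm_ge_zero[of "y - z"]]
    by linarith
  also have "\<dots> \<le> (\<bar>C\<bar> + \<bar>K\<bar> + 1) * norm (y - z)" by (simp add: algebra_simps)
  finally show ?thesis .
qed

lemma L2_convergence_imp_uniform_convergence_on_bounded:
  fixes f :: "'a::euclidean_space \<Rightarrow> 'b::real_normed_vector" and fm :: "nat \<Rightarrow> 'a \<Rightarrow> 'b"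
  assumes f_lip: "\<And>x y. norm (f x - f y) \<le> C * norm (x - y)"
    and fm_lip: "\<And>m x y. m \<ge> 1 \<Longrightarrow> norm (fm m x - fm m y) \<le> K * norm (x - y)"
    and L2: "\<And>D. compact D \<Longrightarrow> (\<lambda>m. sqrt (LINT x:D|lborel. (norm (fm m x - f x))\<^sup>2)) \<longlonglongrightarrow> 0"
    and e: "e > 0"
  shows "\<exists>m0. \<forall>m\<ge>m0. \<forall>x. norm x \<le> R \<longrightarrow> norm (f x - fm m x) \<le> e"
proof -
  define L where "L = \<bar>C\<bar> + \<bar>K\<bar> + 1"
  define r where "r = e / (2 * L)"
  define D where "D = cball (0::'a) (R + r)"
  define c where "c = (e / 2)\<^sup>2 * measure lborel (ball (0::'a) r)"
  have L: "L > 0" unfolding L_def by simp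
  have "measure lborel (ball (0::'a) r) > 0"
    using content_ball_pos[of r] e L unfolding r_def by simp
  hence c: "c > 0" unfolding c_def using e by simp
  have "compact D" unfolding D_def by simp
  obtain m1 where m1: "\<forall>m\<ge>m1. norm (sqrt (LINT x:D|lborel. (norm (fm m x - f x))\<^sup>2) - 0) < sqrt c"
    using LIMSEQ_D[OF L2[OF \<open>compact D\<close>], of "sqrt c"] c by auto
  have m1: "(LINT x:D|lborel. (norm (fm m x - f x))\<^sup>2) < c" if "m \<ge> m1" for m
  proof -
    have "sqrt (LINT x:D|lborel. (norm (fm m x - f x))\<^sup>2) < sqrt c"
      using m1[rule_format, OF that] abs_ge_self[of "sqrt (LINT x:D|lborel. (norm (fm m x - f x))\<^sup>2)"]
      by (simp only: diff_zero real_norm_def)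
    thus ?thesis by simp
  qed
  have "norm (f x - fm m x) \<le> e" if m: "m \<ge> max m1 1" and x: "norm x \<le> R" for m x
  proof (rule ccontr)
    assume "\<not> norm (f x - fm m x) \<le> e"
    hence big: "e < norm (fm m x - f x)" by (simp add: norm_minus_commute)
    have lip: "norm ((fm m y - f y) - (fm m z - f z)) \<le> L * norm (y - z)" for y z
      unfolding L_def using m by (intro norm_diff_lipschitz_diff_le fm_lip f_lip) auto
    have "ball x r \<subseteq> D"
    proof
      fix y assume "y \<in> ball x r"
      hence "norm (y - x) < r" by (simp add: dist_norm norm_minus_commute)
      thus "y \<in> D" unfolding D_def using x norm_triangle_sub[of y x] by simp
    qed
    hence "c \<le> (LINT y:D|lborel. (norm (fm m y - f y))\<^sup>2)"
      unfolding c_def r_def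
      by (rule L2_lower_bound_of_lipschitz[where h="\<lambda>y. fm m y - f y", OF lip L big e \<open>compact D\<close>])
    moreover have "(LINT y:D|lborel. (norm (fm m y - f y))\<^sup>2) < c"
      using m1[of m] m by simp
    ultimately show False by linarith
  qed
  thus ?thesis by (intro exI[of _ "max m1 1"]) auto
qed

section \<open>The Euler--Maruyama scheme along one path\<close>

definition drift_bound :: "real \<Rightarrow> real \<Rightarrow> real \<Rightarrow> real \<Rightarrow> 'a \<Rightarrow> ('a \<Rightarrow> 'a::real_normed_vector) \<Rightarrow> real" where
  "drift_bound T B C g x0 f = 2 * (norm (f 0) + C * (norm x0 + \<bar>g\<bar> * B)) * exp (2 * C * T)"

locale driven_equation =
  fixes T B C g :: real and x0 :: "'a::euclidean_space" and l Y :: "real \<Rightarrow> 'a" and f :: "'a \<Rightarrow> 'a"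
  assumes T_pos: "T > 0"
    and l_bounded: "\<And>t. t \<in> {0..T} \<Longrightarrow> norm (l t) \<le> B"
    and C_pos: "C > 0" and f_lipschitz: "\<And>x y. norm (f x - f y) \<le> C * norm (x - y)"
    and solution: "\<And>t. t \<in> {0..T} \<Longrightarrow> ((\<lambda>s. f (Y s)) has_integral (Y t - x0 - g *\<^sub>R l t)) {0..t}"
begin

lemma B_nonneg: "B \<ge> 0"
  using l_bounded[of 0] T_pos by (smt (verit) atLeastAtMost_iff norm_ge_zero)

lemma drift_bound_nonneg: "drift_bound T B C g x0 f \<ge> 0"
  using C_pos B_nonneg unfolding drift_bound_def by simp

lemma increment:
  assumes "0 \<le> a" "a \<le> b" "b \<le> T"
  shows "((\<lambda>s. f (Y s)) has_integral ((Y b - g *\<^sub>R l b) - (Y a - g *\<^sub>R l a))) {a..b}"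
  using has_integral_interval_of_indefinite[OF solution assms] by (simp add: algebra_simps)

lemma initial: "Y 0 = x0 + g *\<^sub>R l 0"
  using indefinite_integral_at_0[OF solution[of 0]] T_pos by (simp add: algebra_simps)

text \<open>Gronwall applied to \<open>\<parallel>f (Y t)\<parallel>\<close>, which is a priori bounded since the
  indefinite integral of \<open>f \<circ> Y\<close> is continuous.\<close>
lemma drift_bounded:
  assumes t: "t \<in> {0..T}"
  shows "norm (f (Y t)) \<le> drift_bound T B C g x0 f"
proof -
  define I where "I t = Y t - x0 - g *\<^sub>R l t" for t
  define A where "A = norm (f 0) + C * (norm x0 + \<bar>g\<bar> * B)"
  have int: "(\<lambda>s. f (Y s)) integrable_on {0..T}"
    using solution[of T] T_pos by (auto simp: integrable_on_def)
  have I_eq: "I t = integral {0..t} (\<lambda>s. f (Y s))" if "t \<in> {0..T}" for t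
    using solution[OF that] unfolding I_def by (simp add: integral_unique)
  have Y_le: "norm (Y t) \<le> norm x0 + \<bar>g\<bar> * B + norm (I t)" if t: "t \<in> {0..T}" for t
  proof -
    have "Y t = x0 + g *\<^sub>R l t + I t" unfolding I_def by simp
    hence "norm (Y t) \<le> norm x0 + norm (g *\<^sub>R l t) + norm (I t)"
      by (metis norm_triangle_ineq3)
    moreover have "norm (g *\<^sub>R l t) \<le> \<bar>g\<bar> * B" using l_bounded[OF t] by (simp add: mult_left_mono)
    ultimately show ?thesis by linarith
  qed
  have f_le: "norm (f (Y t)) \<le> norm (f 0) + C * norm (Y t)" for t
    using norm_triangle_sub[of "f (Y t)" "f 0"] f_lipschitz[of "Y t" 0] by simp
  have "compact ((\<lambda>t. integral {0..t} (\<lambda>s. f (Y s))) ` {0..T})"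
    by (intro compact_continuous_image indefinite_integral_continuous_1 int) simp
  hence "bounded ((\<lambda>t. integral {0..t} (\<lambda>s. f (Y s))) ` {0..T})" by (rule compact_imp_bounded)
  then obtain MI where "\<forall>x\<in>(\<lambda>t. integral {0..t} (\<lambda>s. f (Y s))) ` {0..T}. norm x \<le> MI"
    unfolding bounded_iff by blast
  hence MI: "\<And>t. t \<in> {0..T} \<Longrightarrow> norm (I t) \<le> MI" using I_eq by simp
  have a_priori: "norm (f (Y t)) \<le> norm (f 0) + C * (norm x0 + \<bar>g\<bar> * B + MI)"
    if t: "t \<in> {0..T}" for t
    using f_le[of t] Y_le[OF t] MI[OF t] C_pos by (smt (verit) mult_left_mono)
  have "(\<lambda>s. f (Y s)) absolutely_integrable_on {0..T}"
    by (rule measurable_bounded_by_integrable_imp_absolutely_integrable[OF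
          integrable_imp_measurable[OF int] _ _ a_priori]) auto
  hence norm_int: "(\<lambda>s. norm (f (Y s))) integrable_on {0..T}"
    unfolding absolutely_integrable_on_def by simp
  have "norm (f (Y t)) \<le> A + C * integral {0..t} (\<lambda>s. norm (f (Y s)))" if t: "t \<in> {0..T}" for t
  proof -
    have "norm (I t) \<le> integral {0..t} (\<lambda>s. norm (f (Y s)))"
      unfolding I_eq[OF t] using t
      by (intro integral_norm_bound_integral integrable_subinterval_real[OF int]
          integrable_subinterval_real[OF norm_int]) auto
    hence "norm (Y t) \<le> (norm x0 + \<bar>g\<bar> * B) + integral {0..t} (\<lambda>s. norm (f (Y s)))"
      using Y_le[OF t] by linarith
    hence "C * norm (Y t) \<le> C * (norm x0 + \<bar>g\<bar> * B) + C * integral {0..t} (\<lambda>s. norm (f (Y s)))"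
      using C_pos by (simp add: distrib_left[symmetric])
    thus ?thesis using f_le[of t] unfolding A_def by linarith
  qed
  hence "norm (f (Y t)) \<le> 2 * A * exp (2 * C * T)"
    using C_pos B_nonneg T_pos a_priori norm_int t
    by (intro gronwall_bounded[where \<phi>="\<lambda>t. norm (f (Y t))"]) (auto simp: A_def)
  thus ?thesis unfolding drift_bound_def A_def .
qed

lemma increment_bounded:
  assumes "0 \<le> a" "a \<le> b" "b \<le> T"
  shows "norm ((Y b - g *\<^sub>R l b) - (Y a - g *\<^sub>R l a)) \<le> drift_bound T B C g x0 f * (b - a)"
proof -
  have "norm ((Y b - g *\<^sub>R l b) - (Y a - g *\<^sub>R l a)) \<le> drift_bound T B C g x0 f * measure lborel (cbox a b)"
    by (rule has_integral_bound[OF drift_bound_nonneg]) (use increment[OF assms] drift_bounded assms in auto)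
  thus ?thesis using assms by simp
qed

end

definition euler_grid_bound :: "real \<Rightarrow> real \<Rightarrow> real \<Rightarrow> real \<Rightarrow> real \<Rightarrow> 'a::real_normed_vector \<Rightarrow> real" where
  "euler_grid_bound T B K G F0 x0 = (norm x0 + G * B + T * F0) * exp (K * T)"

locale euler_scheme =
  fixes T B K :: real and n :: nat and dt g :: real and x0 :: "'a::euclidean_space"
    and l X :: "real \<Rightarrow> 'a" and F :: "'a \<Rightarrow> 'a"
  assumes T_pos: "T > 0" and n_pos: "n \<ge> 1" and dt_def: "dt = T / n"
    and l_bounded: "\<And>t. t \<in> {0..T} \<Longrightarrow> norm (l t) \<le> B"
    and K_nonneg: "K \<ge> 0" and F_lipschitz: "\<And>x y. norm (F x - F y) \<le> K * norm (x - y)"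
    and scheme: "\<And>t. t \<in> {0..T} \<Longrightarrow>
      ((\<lambda>s. F (X (dt * of_int \<lfloor>s / dt\<rfloor>))) has_integral (X t - x0 - g *\<^sub>R l t)) {0..t}"
begin

lemma dt_pos: "dt > 0"
  using T_pos n_pos unfolding dt_def by simp

lemma grid_end: "real n * dt = T"
  using n_pos unfolding dt_def by simp

lemma grid_nonneg: "0 \<le> real k * dt"
  using dt_pos by simp

lemma grid_le_T: "k \<le> n \<Longrightarrow> real k * dt \<le> T"
  using dt_pos by (simp flip: grid_end add: mult_right_mono)

lemma grid_Suc: "real (Suc k) * dt = real k * dt + dt"
  by (simp add: algebra_simps)

lemma cell_containing:
  assumes "t \<in> {0..<T}"
  obtains j where "j < n" "real j * dt \<le> t" "t < real (Suc j) * dt"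
proof -
  define j where "j = nat \<lfloor>t / dt\<rfloor>"
  have "real j = of_int \<lfloor>t / dt\<rfloor>" using assms dt_pos unfolding j_def by simp
  hence "real j \<le> t / dt" "t / dt < real j + 1" by linarith+
  hence j: "real j * dt \<le> t" "t < real (Suc j) * dt" using dt_pos by (auto simp: field_simps)
  have "j < n"
  proof (rule ccontr)
    assume "\<not> j < n"
    hence "real n * dt \<le> real j * dt" using dt_pos by (intro mult_right_mono) auto
    thus False using j assms grid_end by simp
  qed
  thus thesis using that j by blast
qed

lemma floor_in_cell:
  assumes "real j * dt \<le> s" "s < real (Suc j) * dt"
  shows "dt * of_int \<lfloor>s / dt\<rfloor> = real j * dt"
proof -
  have "real j \<le> s / dt" "s / dt < real j + 1" using assms dt_pos by (auto simp: field_simps)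
  hence "\<lfloor>s / dt\<rfloor> = int j" by (intro floor_unique) auto
  thus ?thesis by simp
qed

lemma cell_formula:
  assumes j: "j < n" and t: "real j * dt \<le> t" "t \<le> real (Suc j) * dt"
  shows "X t = X (real j * dt) + g *\<^sub>R (l t - l (real j * dt)) + (t - real j * dt) *\<^sub>R F (X (real j * dt))"
proof -
  have tT: "t \<le> T" using t(2) grid_le_T[of "Suc j"] j by simp
  have const: "((\<lambda>s. F (X (real j * dt))) has_integral (t - real j * dt) *\<^sub>R F (X (real j * dt))) {real j * dt..t}"
    using has_integral_const_real[of "F (X (real j * dt))" "real j * dt" t] t by simp
  have "((\<lambda>s. F (X (dt * of_int \<lfloor>s / dt\<rfloor>))) has_integral (t - real j * dt) *\<^sub>R F (X (real j * dt))) {real j * dt..t}"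
  proof (rule has_integral_spike_finite[OF _ _ const])
    fix s assume "s \<in> {real j * dt..t} - {real (Suc j) * dt}"
    hence "real j * dt \<le> s" "s < real (Suc j) * dt" using t by auto
    thus "F (X (dt * of_int \<lfloor>s / dt\<rfloor>)) = F (X (real j * dt))" by (simp only: floor_in_cell)
  qed simp
  moreover have "((\<lambda>s. F (X (dt * of_int \<lfloor>s / dt\<rfloor>))) has_integral
      (X t - x0 - g *\<^sub>R l t) - (X (real j * dt) - x0 - g *\<^sub>R l (real j * dt))) {real j * dt..t}"
    by (rule has_integral_interval_of_indefinite[where T=T, OF scheme]) (use grid_nonneg t tT in auto)
  ultimately have "(t - real j * dt) *\<^sub>R F (X (real j * dt))
      = (X t - x0 - g *\<^sub>R l t) - (X (real j * dt) - x0 - g *\<^sub>R l (real j * dt))"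
    by (rule has_integral_unique)
  thus ?thesis by (simp add: algebra_simps)
qed

lemma grid_formula:
  "k \<le> n \<Longrightarrow> X (real k * dt) = x0 + g *\<^sub>R l (real k * dt) + (\<Sum>i<k. dt *\<^sub>R F (X (real i * dt)))"
proof (induction k)
  case 0
  show ?case
    using indefinite_integral_at_0[OF scheme[of 0]] T_pos by (simp add: algebra_simps)
next
  case (Suc k)
  have "X (real (Suc k) * dt) = X (real k * dt) + g *\<^sub>R (l (real (Suc k) * dt) - l (real k * dt))
      + dt *\<^sub>R F (X (real k * dt))"
    using cell_formula[of k "real (Suc k) * dt"] Suc.prems dt_pos by (simp add: algebra_simps)
  thus ?case using Suc by (simp add: algebra_simps)
qed

lemma grid_bounded:
  assumes G: "\<bar>g\<bar> \<le> G" and F0: "norm (F 0) \<le> F0" and k: "k \<le> n"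
  shows "norm (X (real k * dt)) \<le> euler_grid_bound T B K G F0 x0"
proof -
  define A where "A = norm x0 + G * B + T * F0"
  have B0: "B \<ge> 0" using l_bounded[of 0] T_pos by (smt (verit) atLeastAtMost_iff norm_ge_zero)
  have F0_nonneg: "F0 \<ge> 0" using F0 norm_ge_zero[of "F 0"] by linarith
  have A0: "A \<ge> 0"
    unfolding A_def using B0 G F0 T_pos by (smt (verit) mult_nonneg_nonneg norm_ge_zero)
  have F_le: "norm (F x) \<le> F0 + K * norm x" for x
    using norm_triangle_sub[of "F x" "F 0"] F_lipschitz[of x 0] F0 by simp
  have "norm (X (real k * dt)) \<le> A + (K * dt) * (\<Sum>i<k. norm (X (real i * dt)))" if k: "k \<le> n" for k
  proof -
    have "norm (X (real k * dt)) \<le> norm x0 + norm (g *\<^sub>R l (real k * dt)) + norm (\<Sum>i<k. dt *\<^sub>R F (X (real i * dt)))"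
      unfolding grid_formula[OF k] by (rule norm_triangle_ineq3)
    also have "norm (g *\<^sub>R l (real k * dt)) \<le> G * B"
      using l_bounded[of "real k * dt"] grid_nonneg grid_le_T[OF k] G B0 by (auto intro!: mult_mono)
    also have "norm (\<Sum>i<k. dt *\<^sub>R F (X (real i * dt))) \<le> (\<Sum>i<k. dt * (F0 + K * norm (X (real i * dt))))"
      using F_le dt_pos by (intro order_trans[OF norm_sum sum_mono]) (simp add: mult_left_mono)
    also have "\<dots> = real k * dt * F0 + (K * dt) * (\<Sum>i<k. norm (X (real i * dt)))"
      by (simp add: sum.distrib sum_distrib_left algebra_simps)
    also have "real k * dt * F0 \<le> T * F0"
      using grid_le_T[OF k] F0_nonneg by (intro mult_right_mono) auto
    finally show ?thesis unfolding A_def by simp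
  qed
  hence "norm (X (real k * dt)) \<le> A * exp ((K * dt) * k)"
    using A0 K_nonneg dt_pos k
    by (intro discrete_gronwall[where u="\<lambda>k. norm (X (real k * dt))" and N=n]) auto
  also have "\<dots> \<le> A * exp (K * T)"
  proof -
    have "(K * dt) * k \<le> K * T"
      using K_nonneg grid_le_T[OF k] by (simp add: mult.assoc mult_left_mono mult.commute[of dt])
    thus ?thesis using A0 by (intro mult_left_mono) auto
  qed
  finally show ?thesis unfolding A_def euler_grid_bound_def .
qed

lemma bounded: "\<exists>BX. \<forall>t\<in>{0..T}. norm (X t) \<le> BX"
proof -
  define BG where "BG = euler_grid_bound T B K \<bar>g\<bar> (norm (F 0)) x0"
  define BF where "BF = norm (F 0) + K * BG"
  have B0: "B \<ge> 0" using l_bounded[of 0] T_pos by (smt (verit) atLeastAtMost_iff norm_ge_zero)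
  have grid: "norm (X (real j * dt)) \<le> BG" if "j \<le> n" for j
    using grid_bounded[of "\<bar>g\<bar>" "norm (F 0)" j] that unfolding BG_def by simp
  have BF0: "BF \<ge> 0"
    using grid[of 0] K_nonneg unfolding BF_def by (simp add: order_trans[OF norm_ge_zero])
  have "norm (X t) \<le> BG + \<bar>g\<bar> * (2 * B) + T * BF" if t: "t \<in> {0..T}" for t
  proof (cases "t = T")
    case True
    have "0 \<le> \<bar>g\<bar> * (2 * B) + T * BF" using B0 BF0 T_pos by simp
    thus ?thesis using grid[of n] grid_end True by simp
  next
    case False
    hence "t \<in> {0..<T}" using t by simp
    then obtain j where j: "j < n" "real j * dt \<le> t" "t < real (Suc j) * dt"
      by (rule cell_containing)
    have "norm (X t) \<le> norm (X (real j * dt)) + norm (g *\<^sub>R (l t - l (real j * dt)))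
        + norm ((t - real j * dt) *\<^sub>R F (X (real j * dt)))"
      unfolding cell_formula[OF j(1,2) less_imp_le[OF j(3)]] by (rule norm_triangle_ineq3)
    also have "norm (X (real j * dt)) \<le> BG" using grid j by simp
    also have "norm (g *\<^sub>R (l t - l (real j * dt))) \<le> \<bar>g\<bar> * (2 * B)"
    proof -
      have "norm (l t - l (real j * dt)) \<le> norm (l t) + norm (l (real j * dt))"
        by (rule norm_triangle_ineq4)
      also have "\<dots> \<le> 2 * B"
        using l_bounded[of t] l_bounded[of "real j * dt"] t grid_nonneg[of j] grid_le_T[of j] j
        by simp
      finally show ?thesis by (simp add: mult_left_mono)
    qed
    also have "norm ((t - real j * dt) *\<^sub>R F (X (real j * dt))) \<le> T * BF"
    proof -
      have "norm (F (X (real j * dt))) \<le> BF"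
        using norm_triangle_sub[of "F (X (real j * dt))" "F 0"] F_lipschitz[of "X (real j * dt)" 0]
          mult_left_mono[OF grid[of j] K_nonneg] j unfolding BF_def by simp
      moreover have "\<bar>t - real j * dt\<bar> \<le> T" using j t grid_nonneg[of j] by simp
      ultimately show ?thesis using BF0 by (simp add: mult_mono')
    qed
    finally show ?thesis by simp
  qed
  thus ?thesis by (intro exI[of _ "BG + \<bar>g\<bar> * (2 * B) + T * BF"]) auto
qed

end

text \<open>One sample path, with \<open>F = f\<^sub>m\<close> and \<open>g' = g\<^sub>m\<close>; the ball of radius
  \<open>euler_grid_bound\<close> contains all grid values of \<open>X\<close>.\<close>
locale euler_approximation =
  Y: driven_equation T B C g x0 l Y f + X: euler_scheme T B K n dt g' x0 l X F
  for T B C K :: real and n :: nat and dt g g' :: real and x0 :: "'a::euclidean_space"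
    and l Y X :: "real \<Rightarrow> 'a" and f F :: "'a \<Rightarrow> 'a" +
  fixes G F0 ef \<eta> :: real and Os :: "nat \<Rightarrow> real"
  assumes g'_bounded: "\<bar>g'\<bar> \<le> G" and F0: "norm (F 0) \<le> F0"
    and F_close: "\<And>x. norm x \<le> euler_grid_bound T B K G F0 x0 \<Longrightarrow> norm (f x - F x) \<le> ef"
    and l_oscillation: "\<And>j s. j < n \<Longrightarrow> real j * dt \<le> s \<Longrightarrow> s < real (Suc j) * dt
      \<Longrightarrow> norm (l s - l (real j * dt)) \<le> Os j"
    and oscillation_sum: "(\<Sum>j<n. dt * Os j) \<le> \<eta>"
begin

abbreviation "Mf \<equiv> drift_bound T B C g x0 f"
abbreviation "RX \<equiv> euler_grid_bound T B K G F0 x0"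

lemma Os_nonneg: "j < n \<Longrightarrow> Os j \<ge> 0"
  using l_oscillation[of j "real j * dt"] X.dt_pos by (smt (verit) X.grid_Suc norm_ge_zero)

lemma \<eta>_nonneg: "\<eta> \<ge> 0"
  using oscillation_sum Os_nonneg X.dt_pos by (smt (verit) lessThan_iff mult_nonneg_nonneg sum_nonneg)

lemma RX_nonneg: "RX \<ge> 0"
  using g'_bounded F0 Y.B_nonneg Y.T_pos unfolding euler_grid_bound_def
  by (smt (verit) exp_gt_zero mult_nonneg_nonneg norm_ge_zero)

lemma ef_nonneg: "ef \<ge> 0"
  using F_close[of 0] RX_nonneg by (smt (verit) norm_ge_zero norm_zero)

lemma F0_nonneg: "F0 \<ge> 0"
  using F0 norm_ge_zero[of "F 0"] by linarith

lemma Y_cell_oscillation: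
  assumes j: "j < n" and s: "real j * dt \<le> s" "s < real (Suc j) * dt"
  shows "norm (Y s - Y (real j * dt)) \<le> \<bar>g\<bar> * Os j + dt * Mf"
proof -
  have sT: "s \<le> T" using s X.grid_le_T[of "Suc j"] j by simp
  have "Y s - Y (real j * dt) = g *\<^sub>R (l s - l (real j * dt))
      + ((Y s - g *\<^sub>R l s) - (Y (real j * dt) - g *\<^sub>R l (real j * dt)))"
    by (simp add: algebra_simps)
  hence "norm (Y s - Y (real j * dt)) \<le> norm (g *\<^sub>R (l s - l (real j * dt)))
      + norm ((Y s - g *\<^sub>R l s) - (Y (real j * dt) - g *\<^sub>R l (real j * dt)))"
    by (metis norm_triangle_ineq)
  also have "norm (g *\<^sub>R (l s - l (real j * dt))) \<le> \<bar>g\<bar> * Os j"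
    using l_oscillation[OF j s] by (simp add: mult_left_mono)
  also have "norm ((Y s - g *\<^sub>R l s) - (Y (real j * dt) - g *\<^sub>R l (real j * dt))) \<le> Mf * (s - real j * dt)"
    using Y.increment_bounded[of "real j * dt" s] X.grid_nonneg s sT by simp
  also have "Mf * (s - real j * dt) \<le> Mf * dt"
    using Y.drift_bound_nonneg s X.grid_Suc[of j] by (intro mult_left_mono) auto
  finally show ?thesis by (simp add: mult.commute)
qed

definition defect :: "nat \<Rightarrow> 'a" where
  "defect j = ((Y (real (Suc j) * dt) - g *\<^sub>R l (real (Suc j) * dt)) - (Y (real j * dt) - g *\<^sub>R l (real j * dt)))
     - dt *\<^sub>R F (X (real j * dt))"

lemma defect_bounded:
  assumes j: "j < n"
  shows "norm (defect j) \<le>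
    dt * (C * (\<bar>g\<bar> * Os j + dt * Mf) + C * norm (Y (real j * dt) - X (real j * dt)) + ef)"
proof -
  define a where "a = real j * dt"
  define b where "b = real (Suc j) * dt"
  have ab: "0 \<le> a" "a \<le> b" "b \<le> T" "b - a = dt"
    using X.grid_nonneg X.grid_le_T[of "Suc j"] j X.dt_pos unfolding a_def b_def by (auto simp: algebra_simps)
  have "((\<lambda>s. f (Y s) - F (X a)) has_integral defect j) (cbox a b)"
    using has_integral_diff[OF Y.increment[OF ab(1-3)] has_integral_const_real[of "F (X a)" a b]] ab
    unfolding defect_def a_def[symmetric] b_def[symmetric] by simp
  hence "norm (defect j) \<le> (C * (\<bar>g\<bar> * Os j + dt * Mf) + C * norm (Y a - X a) + ef) * measure lborel (cbox a b)"
  proof (rule has_integral_bound_spike_finite[where S="{b}", rotated 2])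
    show "0 \<le> C * (\<bar>g\<bar> * Os j + dt * Mf) + C * norm (Y a - X a) + ef"
      using Y.C_pos Os_nonneg[OF j] Y.drift_bound_nonneg X.dt_pos ef_nonneg by simp
    fix s assume "s \<in> cbox a b - {b}"
    hence s: "real j * dt \<le> s" "s < real (Suc j) * dt" unfolding a_def b_def by auto
    have "f (Y s) - F (X a) = (f (Y s) - f (Y a)) + (f (Y a) - f (X a)) + (f (X a) - F (X a))"
      by simp
    also have "norm \<dots> \<le> norm (f (Y s) - f (Y a)) + norm (f (Y a) - f (X a)) + norm (f (X a) - F (X a))"
      by (rule norm_triangle_ineq3)
    also have "norm (f (Y s) - f (Y a)) \<le> C * (\<bar>g\<bar> * Os j + dt * Mf)"
      using Y.f_lipschitz[of "Y s" "Y a"] Y_cell_oscillation[OF j s] Y.C_pos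
      unfolding a_def by (smt (verit) mult_left_mono)
    also have "norm (f (Y a) - f (X a)) \<le> C * norm (Y a - X a)"
      by (rule Y.f_lipschitz)
    also have "norm (f (X a) - F (X a)) \<le> ef"
      using F_close X.grid_bounded[OF g'_bounded F0, of j] j unfolding a_def by simp
    finally show "norm (f (Y s) - F (X a)) \<le> C * (\<bar>g\<bar> * Os j + dt * Mf) + C * norm (Y a - X a) + ef"
      by simp
  qed simp
  thus ?thesis using ab unfolding a_def by (simp add: mult.commute)
qed

lemma grid_error_formula:
  assumes k: "k \<le> n"
  shows "Y (real k * dt) - X (real k * dt) = (g - g') *\<^sub>R l (real k * dt) + (\<Sum>j<k. defect j)"
proof -
  have "(\<Sum>j<k. (Y (real (Suc j) * dt) - g *\<^sub>R l (real (Suc j) * dt)) - (Y (real j * dt) - g *\<^sub>R l (real j * dt)))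
      = (Y (real k * dt) - g *\<^sub>R l (real k * dt)) - x0"
    using sum_lessThan_telescope[of "\<lambda>j. Y (real j * dt) - g *\<^sub>R l (real j * dt)" k] Y.initial
    by simp
  thus ?thesis
    unfolding defect_def sum_subtractf X.grid_formula[OF k] by (simp add: algebra_simps sum_distrib_left)
qed

lemma grid_error_bounded:
  assumes k: "k \<le> n"
  shows "norm (Y (real k * dt) - X (real k * dt))
    \<le> (\<bar>g - g'\<bar> * B + C * \<bar>g\<bar> * \<eta> + T * (C * dt * Mf + ef)) * exp (C * T)"
proof -
  define A where "A = \<bar>g - g'\<bar> * B + C * \<bar>g\<bar> * \<eta> + T * (C * dt * Mf + ef)"
  define e where "e k = norm (Y (real k * dt) - X (real k * dt))" for k
  have A0: "A \<ge> 0"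
    unfolding A_def using Y.B_nonneg Y.C_pos Y.T_pos X.dt_pos Y.drift_bound_nonneg ef_nonneg \<eta>_nonneg
    by simp
  have "e k \<le> A + (C * dt) * (\<Sum>j<k. e j)" if k: "k \<le> n" for k
  proof -
    have "e k \<le> norm ((g - g') *\<^sub>R l (real k * dt)) + norm (\<Sum>j<k. defect j)"
      unfolding e_def grid_error_formula[OF k] by (rule norm_triangle_ineq)
    also have "norm ((g - g') *\<^sub>R l (real k * dt)) \<le> \<bar>g - g'\<bar> * B"
      using Y.l_bounded[of "real k * dt"] X.grid_nonneg X.grid_le_T[OF k] by (simp add: mult_left_mono)
    also have "norm (\<Sum>j<k. defect j) \<le> (\<Sum>j<k. dt * (C * (\<bar>g\<bar> * Os j + dt * Mf) + C * e j + ef))"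
      using defect_bounded k unfolding e_def by (intro order_trans[OF norm_sum sum_mono]) auto
    also have "\<dots> = C * \<bar>g\<bar> * (\<Sum>j<k. dt * Os j) + real k * dt * (C * dt * Mf + ef) + (C * dt) * (\<Sum>j<k. e j)"
      by (simp add: sum.distrib sum_distrib_left algebra_simps)
    also have "C * \<bar>g\<bar> * (\<Sum>j<k. dt * Os j) \<le> C * \<bar>g\<bar> * \<eta>"
    proof -
      have "(\<Sum>j<k. dt * Os j) \<le> (\<Sum>j<n. dt * Os j)"
        using k Os_nonneg X.dt_pos by (intro sum_mono2) auto
      thus ?thesis using oscillation_sum Y.C_pos by (intro mult_left_mono) auto
    qed
    also have "real k * dt * (C * dt * Mf + ef) \<le> T * (C * dt * Mf + ef)"
      using X.grid_le_T[OF k] Y.C_pos X.dt_pos Y.drift_bound_nonneg ef_nonneg by (intro mult_right_mono) auto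
    finally show ?thesis unfolding A_def by simp
  qed
  hence "e k \<le> A * exp ((C * dt) * k)"
    using A0 Y.C_pos X.dt_pos k by (intro discrete_gronwall[where u=e and N=n]) auto
  also have "\<dots> \<le> A * exp (C * T)"
  proof -
    have "(C * dt) * k \<le> C * T"
      using Y.C_pos X.grid_le_T[OF k] by (simp add: mult.assoc mult_left_mono mult.commute[of dt])
    thus ?thesis using A0 by (intro mult_left_mono) auto
  qed
  finally show ?thesis unfolding e_def A_def .
qed

text \<open>Between grid points both processes follow the same increment of \<open>l\<close> up to
  a factor \<open>g - g'\<close>, and drift increments of order \<open>dt\<close>.\<close>
lemma error_bound:
  assumes t: "t \<in> {0..T}"
  shows "norm (Y t - X t) \<le> (\<bar>g - g'\<bar> * B + C * \<bar>g\<bar> * \<eta> + T * (C * dt * Mf + ef)) * exp (C * T)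
    + 2 * \<bar>g - g'\<bar> * B + dt * (Mf + F0 + K * RX)"
proof (cases "t = T")
  case True
  have "0 \<le> 2 * \<bar>g - g'\<bar> * B + dt * (Mf + F0 + K * RX)"
    using Y.B_nonneg X.dt_pos Y.drift_bound_nonneg F0_nonneg X.K_nonneg RX_nonneg by simp
  thus ?thesis using grid_error_bounded[of n] X.grid_end True by simp
next
  case False
  hence "t \<in> {0..<T}" using t by simp
  then obtain j where j: "j < n" "real j * dt \<le> t" "t < real (Suc j) * dt"
    by (rule X.cell_containing)
  define a where "a = real j * dt"
  have ta: "0 \<le> t - a" "t - a \<le> dt" using j X.grid_Suc[of j] unfolding a_def by auto
  have split: "Y t - X t = (Y a - X a) + (g - g') *\<^sub>R (l t - l a)
      + ((Y t - g *\<^sub>R l t) - (Y a - g *\<^sub>R l a)) - (t - a) *\<^sub>R F (X a)"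
    unfolding X.cell_formula[OF j(1,2) less_imp_le[OF j(3)]] a_def by (simp add: algebra_simps)
  have "norm (Y t - X t) \<le> norm (Y a - X a) + norm ((g - g') *\<^sub>R (l t - l a))
      + norm ((Y t - g *\<^sub>R l t) - (Y a - g *\<^sub>R l a)) + norm ((t - a) *\<^sub>R F (X a))"
    unfolding split using norm_triangle_ineq4[of "(Y a - X a) + (g - g') *\<^sub>R (l t - l a) + ((Y t - g *\<^sub>R l t) - (Y a - g *\<^sub>R l a))"
        "(t - a) *\<^sub>R F (X a)"]
      norm_triangle_ineq3[of "Y a - X a" "(g - g') *\<^sub>R (l t - l a)" "(Y t - g *\<^sub>R l t) - (Y a - g *\<^sub>R l a)"]
    by linarith
  also have "norm (Y a - X a) \<le> (\<bar>g - g'\<bar> * B + C * \<bar>g\<bar> * \<eta> + T * (C * dt * Mf + ef)) * exp (C * T)"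
    using grid_error_bounded j unfolding a_def by simp
  also have "norm ((g - g') *\<^sub>R (l t - l a)) \<le> 2 * \<bar>g - g'\<bar> * B"
  proof -
    have "norm (l t - l a) \<le> norm (l t) + norm (l a)" by (rule norm_triangle_ineq4)
    also have "\<dots> \<le> 2 * B"
      using Y.l_bounded[of t] Y.l_bounded[of a] t X.grid_nonneg[of j] X.grid_le_T[of j] j
      unfolding a_def by simp
    finally have "\<bar>g - g'\<bar> * norm (l t - l a) \<le> \<bar>g - g'\<bar> * (2 * B)"
      by (intro mult_left_mono) auto
    thus ?thesis by simp
  qed
  also have "norm ((Y t - g *\<^sub>R l t) - (Y a - g *\<^sub>R l a)) \<le> Mf * dt"
    using Y.increment_bounded[of a t] X.grid_nonneg[of j] j t ta Y.drift_bound_nonneg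
    unfolding a_def by (smt (verit) atLeastAtMost_iff mult_left_mono)
  also have "norm ((t - a) *\<^sub>R F (X a)) \<le> dt * (F0 + K * RX)"
  proof -
    have "norm (F (X a)) \<le> F0 + K * RX"
      using norm_triangle_sub[of "F (X a)" "F 0"] X.F_lipschitz[of "X a" 0] F0
        mult_left_mono[OF X.grid_bounded[OF g'_bounded F0, of j] X.K_nonneg] j
      unfolding a_def by simp
    thus ?thesis using ta by (simp add: mult_mono')
  qed
  finally show ?thesis by (simp add: algebra_simps)
qed

lemma skorokhod_dist_le:
  assumes "\<And>t. t \<in> {0..T} \<Longrightarrow> norm (Y t - X t) \<le> \<delta>"
  shows "skorokhod_dist T Y X \<le> \<delta>"
proof -
  obtain BX where "\<forall>t\<in>{0..T}. norm (X t) \<le> BX" using X.bounded by blast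
  thus ?thesis using Y.T_pos assms by (intro skorokhod_dist_le_uniform_dist[where B=BX]) auto
qed

end

lemma euler_approximation_of_path:
  fixes x0 :: "'a::euclidean_space" and l Y X :: "real \<Rightarrow> 'a" and f F :: "'a \<Rightarrow> 'a"
  assumes T: "T > 0" and n: "n \<ge> 1" and dt: "dt = T / n"
    and l_rc: "\<And>t. t \<in> {0..<T} \<Longrightarrow> (l \<longlongrightarrow> l t) (at_right t)"
    and l_bounded: "\<And>t. t \<in> {0..T} \<Longrightarrow> norm (l t) \<le> B"
    and l_oscillation: "grid_oscillation T n l \<le> ennreal \<eta>" and \<eta>: "\<eta> \<ge> 0"
    and C: "C > 0" "\<And>x y. norm (f x - f y) \<le> C * norm (x - y)"
    and K: "K \<ge> 0" "\<And>x y. norm (F x - F y) \<le> K * norm (x - y)"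
    and Y: "\<And>t. t \<in> {0..T} \<Longrightarrow> ((\<lambda>s. f (Y s)) has_integral (Y t - x0 - g *\<^sub>R l t)) {0..t}"
    and X: "\<And>t. t \<in> {0..T} \<Longrightarrow>
      ((\<lambda>s. F (X (dt * of_int \<lfloor>s / dt\<rfloor>))) has_integral (X t - x0 - g' *\<^sub>R l t)) {0..t}"
    and G: "\<bar>g'\<bar> \<le> G" and F0: "norm (F 0) \<le> F0"
    and F_close: "\<And>x. norm x \<le> euler_grid_bound T B K G F0 x0 \<Longrightarrow> norm (f x - F x) \<le> ef"
  obtains Os where "euler_approximation T B C K n dt g g' x0 l Y X f F G F0 ef \<eta> Os"
proof -
  obtain Os where Os: "\<And>j s. j < n \<Longrightarrow> real j * (T / n) \<le> s \<Longrightarrow> s < real (Suc j) * (T / n)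
      \<Longrightarrow> norm (l s - l (real j * (T / n))) \<le> Os j" "(\<Sum>j<n. T / n * Os j) \<le> \<eta>"
    using grid_oscillation_cell_bounds[OF l_rc T n \<eta> l_oscillation] by blast
  have "euler_approximation T B C K n dt g g' x0 l Y X f F G F0 ef \<eta> Os"
    using T n dt l_bounded C K Y X G F0 F_close Os by unfold_locales auto
  thus thesis by (rule that)
qed

text \<open>The tolerances split the error bound of \<open>error_bound\<close> into four parts of size \<open>\<delta>/4\<close>.\<close>
lemma euler_approximation_tolerances:
  fixes x0 :: "'a::euclidean_space" and f :: "'a \<Rightarrow> 'a"
  assumes T: "T > 0" and C: "C > 0" and B: "B \<ge> 0" and K: "K \<ge> 0" and G: "G \<ge> 0"
    and F0: "F0 \<ge> 0" and \<delta>: "\<delta> > 0"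
  obtains \<eta> ef tol h where "\<eta> > 0" "ef > 0" "tol > 0" "h > 0"
    "\<And>n dt g' l Y X F Os. euler_approximation T B C K n dt g g' x0 l Y X f F G F0 ef \<eta> Os
       \<Longrightarrow> dt \<le> h \<Longrightarrow> \<bar>g - g'\<bar> \<le> tol \<Longrightarrow> skorokhod_dist T Y X \<le> \<delta>"
proof -
  define E where "E = exp (C * T)"
  define Mf where "Mf = drift_bound T B C g x0 f"
  define RX where "RX = euler_grid_bound T B K G F0 x0"
  have Mf0: "Mf \<ge> 0" unfolding Mf_def drift_bound_def using B C by simp
  have RX0: "RX \<ge> 0" unfolding RX_def euler_grid_bound_def using B G F0 T by simp
  define cg where "cg = B * E + 2 * B"
  define c\<eta> where "c\<eta> = C * \<bar>g\<bar> * E"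
  define cf where "cf = T * E"
  define ch where "ch = T * C * Mf * E + Mf + F0 + K * RX"
  have c0: "cg \<ge> 0" "c\<eta> \<ge> 0" "cf \<ge> 0" "ch \<ge> 0"
    unfolding cg_def c\<eta>_def cf_def ch_def E_def using B C T Mf0 F0 K RX0 by simp_all
  define \<eta> where "\<eta> = \<delta> / 4 / (c\<eta> + 1)"
  define ef where "ef = \<delta> / 4 / (cf + 1)"
  define tol where "tol = \<delta> / 4 / (cg + 1)"
  define h where "h = \<delta> / 4 / (ch + 1)"
  have pos: "\<eta> > 0" "ef > 0" "tol > 0" "h > 0"
    unfolding \<eta>_def ef_def tol_def h_def using \<delta> c0 by simp_all
  have "skorokhod_dist T Y X \<le> \<delta>"
    if approx: "euler_approximation T B C K n dt g g' x0 l Y X f F G F0 ef \<eta> Os"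
      and dt: "dt \<le> h" and g': "\<bar>g - g'\<bar> \<le> tol" for n dt g' l Y X F Os
  proof -
    have dt_pos: "dt > 0"
      using euler_scheme.dt_pos[OF euler_approximation.axioms(2)[OF approx]] .
    have "(\<bar>g - g'\<bar> * B + C * \<bar>g\<bar> * \<eta> + T * (C * dt * Mf + ef)) * E
        + 2 * \<bar>g - g'\<bar> * B + dt * (Mf + F0 + K * RX)
      = cg * \<bar>g - g'\<bar> + c\<eta> * \<eta> + cf * ef + ch * dt"
      unfolding cg_def c\<eta>_def cf_def ch_def by (simp add: algebra_simps)
    also have "\<dots> \<le> \<delta> / 4 + \<delta> / 4 + \<delta> / 4 + \<delta> / 4"
      using c0 pos g' dt dt_pos unfolding \<eta>_def ef_def tol_def h_def
      by (intro add_mono mult_le_of_le_div_add_one) auto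
    finally show ?thesis
      using euler_approximation.error_bound[OF approx] unfolding E_def Mf_def RX_def
      by (intro euler_approximation.skorokhod_dist_le[OF approx]) fastforce
  qed
  with pos that show thesis by blast
qed

section \<open>Events of small probability\<close>

lemma (in finite_measure) decseq_measure_eventually_less:
  assumes A: "range A \<subseteq> sets M" "decseq A" "(\<Inter>k. A k) = {}" and \<epsilon>: "\<epsilon> > 0"
  obtains k where "measure M (A k) < \<epsilon>"
proof -
  have "(\<lambda>k. measure M (A k)) \<longlonglongrightarrow> 0"
    using finite_Lim_measure_decseq[OF A(1,2)] A(3) by simp
  hence "eventually (\<lambda>k. measure M (A k) < \<epsilon>) sequentially"
    using \<epsilon> by (rule order_tendstoD)
  thus thesis using that by (auto simp: eventually_sequentially)
qed

lemma grid_oscillation_measurable: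
  fixes L :: "real \<Rightarrow> 'a \<Rightarrow> 'b::{real_normed_vector, second_countable_topology}"
  assumes T: "T \<ge> 0" and meas: "\<And>t. t \<ge> 0 \<Longrightarrow> L t \<in> borel_measurable M"
  shows "(\<lambda>\<omega>. grid_oscillation T n (\<lambda>t. L t \<omega>)) \<in> borel_measurable M"
proof -
  define Q where "Q j = {q\<in>\<rat>. real j * (T / n) \<le> q \<and> q < real (Suc j) * (T / n)}" for j
  have cell_measurable: "(\<lambda>\<omega>. ennreal (norm (L q \<omega> - L (real j * (T / n)) \<omega>))) \<in> borel_measurable M"
    if "q \<in> Q j" for j q
  proof -
    have "0 \<le> q" "0 \<le> real j * (T / n)"
      using that T unfolding Q_def by (auto intro: order_trans[rotated])
    hence [measurable]: "L q \<in> borel_measurable M" "L (real j * (T / n)) \<in> borel_measurable M"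
      using meas by auto
    show ?thesis by measurable
  qed
  have [measurable]: "(\<lambda>\<omega>. SUP q\<in>Q j. ennreal (norm (L q \<omega> - L (real j * (T / n)) \<omega>))) \<in> borel_measurable M" for j
  proof (rule borel_measurable_SUP)
    show "countable (Q j)" unfolding Q_def by (rule countable_subset[OF _ countable_rat]) auto
  qed (rule cell_measurable)
  show ?thesis unfolding grid_oscillation_def Q_def[symmetric] by measurable
qed

context prob_space
begin

text \<open>The supremum over \<open>[0, T]\<close> of a cadlag path is determined by the countably
  many times \<open>T\<close> and \<open>\<rat> \<inter> [0, T)\<close>.\<close>
lemma cadlag_process_bounded:
  fixes L :: "real \<Rightarrow> 'a \<Rightarrow> 'b::{real_normed_vector, second_countable_topology}"
  assumes meas: "\<And>t. t \<ge> 0 \<Longrightarrow> L t \<in> borel_measurable M"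
    and cad: "\<And>\<omega>. \<omega> \<in> space M \<Longrightarrow> cadlag_on T (\<lambda>t. L t \<omega>)" and T: "T > 0" and \<epsilon>: "\<epsilon> > 0"
  obtains B A where "B \<ge> 0" "A \<in> sets M" "measure M A < \<epsilon>"
    "\<And>\<omega> t. \<omega> \<in> space M - A \<Longrightarrow> t \<in> {0..T} \<Longrightarrow> norm (L t \<omega>) \<le> B"
proof -
  define Q where "Q = insert T {q \<in> \<rat>. 0 \<le> q \<and> q < T}"
  define E where "E k = (\<Union>q\<in>Q. {\<omega> \<in> space M. real k < norm (L q \<omega>)})" for k :: nat
  have Q: "countable Q" "Q \<subseteq> {0..T}" unfolding Q_def using T
    by (auto intro: countable_subset[OF _ countable_rat])
  have "{\<omega> \<in> space M. real k < norm (L q \<omega>)} \<in> sets M" if "q \<in> Q" for q k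
  proof -
    have [measurable]: "L q \<in> borel_measurable M" using meas that Q(2) by auto
    show ?thesis by measurable
  qed
  hence E_sets: "range E \<subseteq> sets M"
    unfolding E_def using Q by (auto intro!: sets.countable_UN')
  have "decseq E"
    by (rule decseq_SucI) (auto simp: E_def)
  moreover have "(\<Inter>k. E k) = {}"
  proof (intro equals0I)
    fix \<omega> assume \<omega>: "\<omega> \<in> (\<Inter>k. E k)"
    hence "\<omega> \<in> space M" unfolding E_def by blast
    then obtain B where B: "\<forall>t\<in>{0..T}. norm (L t \<omega>) \<le> B"
      using cadlag_on_bounded[OF cad T] by blast
    have "norm (L q \<omega>) \<le> real (nat \<lceil>B\<rceil>)" if "q \<in> Q" for q
      using B that Q(2) real_nat_ceiling_ge[of B] by (meson order_trans subsetD)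
    hence "\<omega> \<notin> E (nat \<lceil>B\<rceil>)" unfolding E_def by (auto simp: not_less)
    thus False using \<omega> by blast
  qed
  ultimately obtain k where k: "measure M (E k) < \<epsilon>"
    by (rule decseq_measure_eventually_less[OF E_sets _ _ \<epsilon>])
  have bound: "norm (L t \<omega>) \<le> real k" if \<omega>: "\<omega> \<in> space M - E k" and t: "t \<in> {0..T}" for \<omega> t
  proof (cases "t = T")
    case True thus ?thesis using \<omega> unfolding E_def Q_def by auto
  next
    case False
    hence t': "t \<in> {0..<T}" using t by simp
    have rc: "((\<lambda>t. L t \<omega>) \<longlongrightarrow> L t \<omega>) (at_right t)"
      using cad[of \<omega>] \<omega> t' unfolding cadlag_on_def by blast
    have "norm (L q \<omega> - 0) \<le> real k" if "q \<in> \<rat>" "t < q" "q < T" for q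
    proof -
      have "q \<in> Q" using that t unfolding Q_def by simp
      thus ?thesis using \<omega> unfolding E_def by (auto simp: not_less)
    qed
    hence "norm (L t \<omega> - 0) \<le> real k"
      using t' by (intro right_continuous_norm_le_of_rationals[OF rc]) auto
    thus ?thesis by simp
  qed
  show thesis by (rule that[of "real k" "E k"]) (use E_sets k bound in auto)
qed

lemma cadlag_process_grid_oscillation:
  fixes L :: "real \<Rightarrow> 'a \<Rightarrow> 'b::{real_normed_vector, second_countable_topology}"
  assumes meas: "\<And>t. t \<ge> 0 \<Longrightarrow> L t \<in> borel_measurable M"
    and cad: "\<And>\<omega>. \<omega> \<in> space M \<Longrightarrow> cadlag_on T (\<lambda>t. L t \<omega>)" and T: "T > 0"
    and \<eta>: "\<eta> > 0" and \<epsilon>: "\<epsilon> > 0"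
  obtains A N where "A \<in> sets M" "measure M A < \<epsilon>"
    "\<And>\<omega> n. \<omega> \<in> space M - A \<Longrightarrow> n \<ge> N \<Longrightarrow> grid_oscillation T n (\<lambda>t. L t \<omega>) \<le> ennreal \<eta>"
proof -
  define E where "E N = (\<Union>n\<in>{N..}. {\<omega> \<in> space M. ennreal \<eta> < grid_oscillation T n (\<lambda>t. L t \<omega>)})" for N
  have less_sets: "{\<omega> \<in> space M. ennreal \<eta> < X \<omega>} \<in> sets M"
    if [measurable]: "X \<in> borel_measurable M" for X :: "'a \<Rightarrow> ennreal"
    by measurable
  have "{\<omega> \<in> space M. ennreal \<eta> < grid_oscillation T n (\<lambda>t. L t \<omega>)} \<in> sets M" for n
    using T by (intro less_sets grid_oscillation_measurable[OF _ meas]) auto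
  hence E_sets: "range E \<subseteq> sets M"
    unfolding E_def by (auto intro!: sets.countable_UN')
  have "decseq E"
    unfolding E_def by (intro decseq_SucI UN_mono) auto
  moreover have "(\<Inter>N. E N) = {}"
  proof (intro equals0I)
    fix \<omega> assume \<omega>: "\<omega> \<in> (\<Inter>N. E N)"
    hence "\<omega> \<in> space M" unfolding E_def by blast
    then obtain N where "\<forall>n\<ge>N. grid_oscillation T n (\<lambda>t. L t \<omega>) \<le> ennreal \<eta>"
      using cadlag_grid_oscillation_eventually_le[OF cad T \<eta>] by blast
    hence "\<omega> \<notin> E N" unfolding E_def by (auto simp: not_less)
    thus False using \<omega> by blast
  qed
  ultimately obtain N where N: "measure M (E N) < \<epsilon>"
    by (rule decseq_measure_eventually_less[OF E_sets _ _ \<epsilon>])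
  have "grid_oscillation T n (\<lambda>t. L t \<omega>) \<le> ennreal \<eta>" if "\<omega> \<in> space M - E N" "n \<ge> N" for \<omega> n
    using that unfolding E_def by (auto simp: not_less)
  thus thesis using that[of "E N" N] E_sets N by auto
qed

end

section \<open>Convergence in probability\<close>

lemma grid_step_of_divides:
  assumes T: "T > 0" and dt: "dt > 0" "T / dt \<in> \<nat>"
  obtains n :: nat where "n \<ge> 1" "dt = T / n"
proof -
  obtain n :: nat where n: "T / dt = n" using dt(2) Nats_cases by metis
  have "real n > 0" using n T dt(1) by (metis divide_pos_pos)
  hence "n \<ge> 1" by simp
  moreover have "dt = T / n" using n \<open>real n > 0\<close> dt(1) by (auto simp: field_simps)
  ultimately show thesis by (rule that)
qed

lemma AE_all_grid_steps:
  fixes P :: "nat \<Rightarrow> real \<Rightarrow> 'a \<Rightarrow> bool"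
  assumes T: "T > 0"
    and AE_P: "\<forall>m\<ge>1. \<forall>dt. 0 < dt \<and> dt < 1 \<and> T / dt \<in> \<nat> \<longrightarrow> (AE \<omega> in M. P m dt \<omega>)"
  shows "AE \<omega> in M. \<forall>m n :: nat. m \<ge> 1 \<and> n \<ge> 1 \<and> T / real n < 1 \<longrightarrow> P m (T / n) \<omega>"
proof -
  have "AE \<omega> in M. m \<ge> 1 \<and> n \<ge> 1 \<and> T / n < 1 \<longrightarrow> P m (T / n) \<omega>" for m n :: nat
  proof (cases "m \<ge> 1 \<and> n \<ge> 1 \<and> T / n < 1")
    case True
    hence "T / (T / n) \<in> \<nat>" "0 < T / n" using T by auto
    hence "AE \<omega> in M. P m (T / n) \<omega>" using AE_P True by blast
    thus ?thesis by (rule AE_mp) simp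
  next
    case False
    thus ?thesis by (intro AE_I2) blast
  qed
  thus ?thesis unfolding AE_all_countable by blast
qed

theorem theorem2:
  fixes M :: "'a measure"
    and \<alpha> T :: real
    and x0 :: "real^'n"
    and L :: "real \<Rightarrow> 'a \<Rightarrow> real^'n"
    and f :: "real^'n \<Rightarrow> real^'n"
    and g0 :: real
    and Y :: "real \<Rightarrow> 'a \<Rightarrow> real^'n"
    and fm :: "nat \<Rightarrow> real^'n \<Rightarrow> real^'n"
    and gm :: "nat \<Rightarrow> real"
    and X :: "nat \<Rightarrow> real \<Rightarrow> real \<Rightarrow> 'a \<Rightarrow> real^'n"
  assumes alpha: "1 < \<alpha>" "\<alpha> < 2"
    and T_pos: "T > 0"
    and levy: "sym_stable_levy_motion M \<alpha> L"
    and levy_cadlag: "\<forall>\<omega>\<in>space M. cadlag_on T (\<lambda>t. L t \<omega>)"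
    and f_lip: "\<exists>C. C-lipschitz_on UNIV f"
    and Y_sol: "AE \<omega> in M. \<forall>t\<in>{0..T}.
                  ((\<lambda>s. f (Y s \<omega>)) has_integral (Y t \<omega> - x0 - g0 *\<^sub>R L t \<omega>)) {0..t}"
    and fm_lip: "\<exists>K>0. \<forall>m\<ge>1. \<forall>x1 x2. norm (fm m x1 - fm m x2) \<le> K * norm (x1 - x2)"
    and fm_L2: "\<forall>D. compact D \<longrightarrow>
                  (\<lambda>m. sqrt (LINT x:D|lborel. (norm (fm m x - f x))\<^sup>2)) \<longlonglongrightarrow> 0"
    and gm_conv: "gm \<longlonglongrightarrow> g0"
    and X_EM: "\<forall>m\<ge>1. \<forall>dt. 0 < dt \<and> dt < 1 \<and> T / dt \<in> \<nat> \<longrightarrow>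
                 (AE \<omega> in M. \<forall>t\<in>{0..T}.
                   ((\<lambda>s. fm m (X m dt (dt * of_int \<lfloor>s / dt\<rfloor>) \<omega>))
                      has_integral (X m dt t \<omega> - x0 - gm m *\<^sub>R L t \<omega>)) {0..t})"
  shows "\<forall>\<delta>>0. \<forall>\<epsilon>>0. \<exists>m0. \<exists>h>0. \<forall>m\<ge>m0. \<forall>dt.
           (0 < dt \<and> dt < 1 \<and> dt < h \<and> T / dt \<in> \<nat>) \<longrightarrow>
           (\<exists>A\<in>sets M. {\<omega>\<in>space M. skorokhod_dist T (\<lambda>t. Y t \<omega>) (\<lambda>t. X m dt t \<omega>) > \<delta>} \<subseteq> A
                        \<and> measure M A < \<epsilon>)"
proof (intro allI impI)
  fix \<delta> \<epsilon> :: real assume \<delta>: "\<delta> > 0" and \<epsilon>: "\<epsilon> > 0"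
  have "prob_space M" and L_meas: "\<And>t. t \<ge> 0 \<Longrightarrow> L t \<in> borel_measurable M"
    using levy unfolding sym_stable_levy_motion_def by auto
  then interpret prob_space M by simp
  have cad: "\<And>\<omega>. \<omega> \<in> space M \<Longrightarrow> cadlag_on T (\<lambda>t. L t \<omega>)" using levy_cadlag by simp
  obtain C0 where "C0-lipschitz_on UNIV f" using f_lip by blast
  then obtain C where C: "C > 0" "\<And>x y. norm (f x - f y) \<le> C * norm (x - y)"
    using lipschitz_on_UNIV_normE by blast
  obtain K where K: "K > 0" "\<And>m x y. m \<ge> 1 \<Longrightarrow> norm (fm m x - fm m y) \<le> K * norm (x - y)"
    using fm_lip by blast
  have "Bseq gm" using gm_conv by (intro convergent_imp_Bseq) (auto simp: convergent_def)
  then obtain G where G: "G > 0" "\<And>m. \<bar>gm m\<bar> \<le> G" by (auto elim: BseqE)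
  have uniform: "\<exists>m0. \<forall>m\<ge>m0. \<forall>x. norm x \<le> R \<longrightarrow> norm (f x - fm m x) \<le> e" if "e > 0" for R e
    using fm_L2 that by (intro L2_convergence_imp_uniform_convergence_on_bounded[OF C(2) K(2)]) auto
  define F0 where "F0 = norm (f 0) + 1"
  obtain mF where mF: "\<And>m. m \<ge> mF \<Longrightarrow> norm (f 0 - fm m 0) \<le> 1" using uniform[of 1 0] by auto
  have F0_nonneg: "F0 \<ge> 0" unfolding F0_def by simp
  have F0: "norm (fm m 0) \<le> F0" if "m \<ge> mF" for m
    using norm_triangle_sub[of "fm m 0" "f 0"] mF[OF that] unfolding F0_def by (simp add: norm_minus_commute)
  obtain B AB where B: "B \<ge> 0" "AB \<in> sets M" "measure M AB < \<epsilon> / 2"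
      "\<And>\<omega> t. \<omega> \<in> space M - AB \<Longrightarrow> t \<in> {0..T} \<Longrightarrow> norm (L t \<omega>) \<le> B"
    using cadlag_process_bounded[OF L_meas cad T_pos, of "\<epsilon> / 2"] \<epsilon> by auto
  obtain \<eta> ef tol h where tol: "\<eta> > 0" "ef > 0" "tol > 0" "h > 0"
      "\<And>n dt g' l Y X F Os. euler_approximation T B C K n dt g0 g' x0 l Y X f F G F0 ef \<eta> Os
         \<Longrightarrow> dt \<le> h \<Longrightarrow> \<bar>g0 - g'\<bar> \<le> tol \<Longrightarrow> skorokhod_dist T Y X \<le> \<delta>"
    using euler_approximation_tolerances[where g=g0 and f=f,
        OF T_pos C(1) B(1) less_imp_le[OF K(1)] less_imp_le[OF G(1)] F0_nonneg \<delta>]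
    by blast
  obtain AO N where N: "AO \<in> sets M" "measure M AO < \<epsilon> / 2"
      "\<And>\<omega> n. \<omega> \<in> space M - AO \<Longrightarrow> n \<ge> N \<Longrightarrow> grid_oscillation T n (\<lambda>t. L t \<omega>) \<le> ennreal \<eta>"
    by (rule cadlag_process_grid_oscillation[OF L_meas cad T_pos tol(1) half_gt_zero[OF \<epsilon>]])
      (assumption | rule that)+
  obtain mA where mA: "\<And>m x. m \<ge> mA \<Longrightarrow> norm x \<le> euler_grid_bound T B K G F0 x0 \<Longrightarrow> norm (f x - fm m x) \<le> ef"
    using uniform[OF tol(2), of "euler_grid_bound T B K G F0 x0"] by blast
  obtain mg where "\<forall>m\<ge>mg. norm (gm m - g0) < tol"
    using LIMSEQ_D[OF gm_conv tol(3)] by blast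
  hence mg: "\<bar>g0 - gm m\<bar> \<le> tol" if "m \<ge> mg" for m
    using that by (auto simp: abs_minus_commute)
  define good where "good \<omega> \<longleftrightarrow>
    (\<forall>t\<in>{0..T}. ((\<lambda>s. f (Y s \<omega>)) has_integral (Y t \<omega> - x0 - g0 *\<^sub>R L t \<omega>)) {0..t}) \<and>
    (\<forall>m n :: nat. m \<ge> 1 \<and> n \<ge> 1 \<and> T / real n < 1 \<longrightarrow> (\<forall>t\<in>{0..T}.
      ((\<lambda>s. fm m (X m (T / n) (T / n * of_int \<lfloor>s / (T / n)\<rfloor>) \<omega>)) has_integral
         (X m (T / n) t \<omega> - x0 - gm m *\<^sub>R L t \<omega>)) {0..t}))" for \<omega>
  have "AE \<omega> in M. good \<omega>"
    using Y_sol AE_all_grid_steps[OF T_pos X_EM] unfolding good_def by simp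
  then obtain Nul where Nul: "{\<omega> \<in> space M. \<not> good \<omega>} \<subseteq> Nul" "emeasure M Nul = 0" "Nul \<in> sets M"
    by (rule AE_E)
  show "\<exists>m0. \<exists>h>0. \<forall>m\<ge>m0. \<forall>dt. (0 < dt \<and> dt < 1 \<and> dt < h \<and> T / dt \<in> \<nat>) \<longrightarrow>
      (\<exists>A\<in>sets M. {\<omega>\<in>space M. skorokhod_dist T (\<lambda>t. Y t \<omega>) (\<lambda>t. X m dt t \<omega>) > \<delta>} \<subseteq> A
        \<and> measure M A < \<epsilon>)"
  proof (intro exI[of _ "max (max mF mA) (max mg 1)"] exI[of _ "min h (T / (N + 1))"] conjI allI impI)
    show "min h (T / (N + 1)) > 0" using tol(4) T_pos by simp
    fix m dt assume m: "max (max mF mA) (max mg 1) \<le> m"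
      and dt: "0 < dt \<and> dt < 1 \<and> dt < min h (T / (N + 1)) \<and> T / dt \<in> \<nat>"
    have "dt > 0" "T / dt \<in> \<nat>" using dt by auto
    then obtain n :: nat where n: "n \<ge> 1" "dt = T / n" by (rule grid_step_of_divides[OF T_pos])
    have "N \<le> n"
    proof (rule ccontr)
      assume "\<not> N \<le> n"
      hence "T / (N + 1) \<le> T / n" using T_pos n(1) by (intro divide_left_mono) auto
      thus False using dt n(2) by simp
    qed
    let ?A = "Nul \<union> AB \<union> AO"
    have "measure M ?A \<le> measure M Nul + measure M AB + measure M AO"
      using measure_Un_le[where M=M and A="Nul \<union> AB" and B=AO] measure_Un_le[where M=M and A=Nul and B=AB]
        Nul(3) B(2) N(1) by fastforce
    moreover have "measure M Nul = 0" using Nul(2) by (simp add: measure_def)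
    ultimately have "measure M ?A < \<epsilon>" using B(3) N(2) by simp
    moreover have close: "skorokhod_dist T (\<lambda>t. Y t \<omega>) (\<lambda>t. X m dt t \<omega>) \<le> \<delta>"
      if \<omega>: "\<omega> \<in> space M" "\<omega> \<notin> ?A" for \<omega>
    proof -
      have good: "good \<omega>" using Nul(1) \<omega> by blast
      have rc: "((\<lambda>t. L t \<omega>) \<longlongrightarrow> L t \<omega>) (at_right t)" if "t \<in> {0..<T}" for t
        using cad \<omega>(1) that unfolding cadlag_on_def by blast
      have L_le: "norm (L t \<omega>) \<le> B" if "t \<in> {0..T}" for t using B(4) \<omega> that by blast
      have osc: "grid_oscillation T n (\<lambda>t. L t \<omega>) \<le> ennreal \<eta>" using N(3) \<omega> \<open>N \<le> n\<close> by blast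
      have Y_eq: "((\<lambda>s. f (Y s \<omega>)) has_integral (Y t \<omega> - x0 - g0 *\<^sub>R L t \<omega>)) {0..t}"
        if "t \<in> {0..T}" for t using good that unfolding good_def by blast
      have X_eq: "((\<lambda>s. fm m (X m dt (dt * of_int \<lfloor>s / dt\<rfloor>) \<omega>)) has_integral
          (X m dt t \<omega> - x0 - gm m *\<^sub>R L t \<omega>)) {0..t}" if "t \<in> {0..T}" for t
        using good that n dt m unfolding good_def by auto
      have m': "mA \<le> m" "mF \<le> m" "1 \<le> m" using m by auto
      obtain Os where "euler_approximation T B C K n dt g0 (gm m) x0 (\<lambda>t. L t \<omega>)
          (\<lambda>t. Y t \<omega>) (\<lambda>t. X m dt t \<omega>) f (fm m) G F0 ef \<eta> Os"
        using euler_approximation_of_path[OF T_pos n(1) n(2) rc L_le osc less_imp_le[OF tol(1)] C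
            less_imp_le[OF K(1)] K(2)[OF m'(3)] Y_eq X_eq G(2) F0[OF m'(2)] mA[OF m'(1)]]
        by blast
      thus ?thesis using tol(5) dt mg m by simp
    qed
    moreover have "{\<omega>\<in>space M. skorokhod_dist T (\<lambda>t. Y t \<omega>) (\<lambda>t. X m dt t \<omega>) > \<delta>} \<subseteq> ?A"
      using close by (force simp: not_le[symmetric])
    ultimately show "\<exists>A\<in>sets M. {\<omega>\<in>space M. skorokhod_dist T (\<lambda>t. Y t \<omega>) (\<lambda>t. X m dt t \<omega>) > \<delta>} \<subseteq> A
        \<and> measure M A < \<epsilon>"
      using Nul(3) B(2) N(1) by blast
  qed
qed

end
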